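(* Let $k$ be a field of characteristic $p>0$ and let $G=H\times C$ be a finite group scheme over $k$, where $H$ is a finite group scheme over $k$ and $C$ is the group scheme of a cyclic group of order $p$ with generator $z$; put $Z=z-1$, so $kC\cong k[Z]/(Z^p)$ and $kG\cong kH\otimes k[Z]/(Z^p)$. Let $C_*$ and $D_*$ be chain complexes of $kH$-modules concentrated in nonnegative degrees, and let $M(C_*,n)$, $M(D_*,n)$ be the resolution modules defined in the context. Then: (1) Any chain map $\sigma:C_*\to D_*$ (degree preserving, $\sigma_i:C_i\to D_i$) induces a $kG$-homomorphism $M(\sigma):M(C_*,n)\to M(D_*,n)$, given on each $kH$-summand by the corresponding component of $\sigma$, for every positive integer $n$ and for $n=\infty$. (2) For every positive integer $n$ and for $n=\infty$, $M(C_*\oplus D_*,n)\cong M(C_*,n)\oplus M(D_*,n)$. (3) If $J$ is a subgroup scheme of $H$, then the restriction of $M(C_*,n)$ to $J\times C$ is isomorphic to $M((C_* )_{\downarrow kJ},n)$, where $(C_* )_{\downarrow kJ}$ is $C_*$ regarded as a complex of $kJ$-modules. (4) If $C_*$ is an exact complex of projective $kH$-modules, then $M(C_*,\infty)$ is zero in the stable module category $\mathbf{StMod}(kG)$ (i.e. it is projective). (5) If $C_*$ and $D_*$ are projective resolutions of the same $kH$-module $N$, then $M(C_*,\infty)\cong M(D_*,\infty)$ in $\mathbf{StMod}(kG)$.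
   Context: A $kG$-module is the same as a $kH$-module together with a $kH$-linear endomorphism $Z$ with $Z^p=0$. For a complex $\cdots\to C_2\xrightarrow{\partial}C_1\xrightarrow{\partial}C_0\to 0$ of $kH$-modules and a positive integer $n$, the resolution module $M(C_*,n)$ is the $kG$-module whose restriction to $kH$ is $C_0\oplus C_1^{p-1}\oplus C_2\oplus C_3^{p-1}\oplus\cdots\oplus C_{2n-1}^{p-1}$, with $Z$ acting as follows: for $i$ odd and $(m_1,\dots,m_{p-1})\in C_i^{p-1}$, $Z(m_1,\dots,m_{p-1})=(0,m_1,\dots,m_{p-2})+\partial(m_{p-1})\in C_i^{p-1}\oplus C_{i-1}$; for $m\in C_0$, $Zm=0$; for $m\in C_{2j}$ with $j>0$, $Zm=(\partial(m),0,\dots,0)\in C_{2j-1}^{p-1}$. These form a nested sequence $M(C_*,1)\subseteq M(C_*,2)\subseteq\cdots$ and $M(C_*,\infty)$ is the union, whose restriction to $kH$ is $\bigoplus_{i\ge0}(C_{2i}\oplus C_{2i+1}^{p-1})$ with the same $Z$-action. $\mathbf{StMod}(kG)$ denotes the stable category of all $kG$-modules modulo projectives. *)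

theory Defs
  imports Main "HOL-Library.Function_Algebras" "HOL-Library.Product_Plus"
          "HOL-Library.Extended_Nat"
begin

text \<open>A finite group scheme H over k is encoded by its group algebra kH, a
finite-dimensional cocommutative Hopf algebra over k, given by structure constants
with respect to a basis indexed by a finite type 'b.  Elements of kH are coefficient
vectors 'b => 'k.
  e_i e_j = sum_l mc i j l e_l ;  1 = sum_l un l e_l ;
  Delta e_l = sum_{i,j} dc l i j (e_i (x) e_j) ;  eps e_l = ep l ;  S e_i = sum_m sc i m e_m.\<close>

record ('b, 'k) hopf =
  mc :: "'b \<Rightarrow> 'b \<Rightarrow> 'b \<Rightarrow> 'k"
  un :: "'b \<Rightarrow> 'k"
  dc :: "'b \<Rightarrow> 'b \<Rightarrow> 'b \<Rightarrow> 'k"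
  ep :: "'b \<Rightarrow> 'k"
  sc :: "'b \<Rightarrow> 'b \<Rightarrow> 'k"

definition kron :: "'a \<Rightarrow> 'a \<Rightarrow> 'k::field" where
  "kron a b = (if a = b then 1 else 0)"

definition finite_group_scheme :: "('b::finite, 'k::field) hopf \<Rightarrow> bool" where
  "finite_group_scheme H \<longleftrightarrow>
     \<comment> \<open>associativity and unit\<close>
     (\<forall>i j k m. (\<Sum>l\<in>UNIV. mc H i j l * mc H l k m) = (\<Sum>l\<in>UNIV. mc H j k l * mc H i l m)) \<and>
     (\<forall>j l. (\<Sum>i\<in>UNIV. un H i * mc H i j l) = kron j l) \<and>
     (\<forall>j l. (\<Sum>i\<in>UNIV. un H i * mc H j i l) = kron j l) \<and>
     \<comment> \<open>coassociativity, counit, cocommutativity\<close>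
     (\<forall>l a b c. (\<Sum>m\<in>UNIV. dc H l m c * dc H m a b) = (\<Sum>m\<in>UNIV. dc H l a m * dc H m b c)) \<and>
     (\<forall>l j. (\<Sum>i\<in>UNIV. ep H i * dc H l i j) = kron l j) \<and>
     (\<forall>l i. (\<Sum>j\<in>UNIV. ep H j * dc H l i j) = kron l i) \<and>
     (\<forall>l i j. dc H l i j = dc H l j i) \<and>
     \<comment> \<open>comultiplication and counit are algebra maps\<close>
     (\<forall>i j a b. (\<Sum>l\<in>UNIV. mc H i j l * dc H l a b) =
        (\<Sum>a1\<in>UNIV. \<Sum>b1\<in>UNIV. \<Sum>a2\<in>UNIV. \<Sum>b2\<in>UNIV. dc H i a1 b1 * dc H j a2 b2 * mc H a1 a2 a * mc H b1 b2 b)) \<and>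
     (\<forall>a b. (\<Sum>l\<in>UNIV. un H l * dc H l a b) = un H a * un H b) \<and>
     (\<forall>i j. (\<Sum>l\<in>UNIV. mc H i j l * ep H l) = ep H i * ep H j) \<and>
     (\<Sum>l\<in>UNIV. un H l * ep H l) = 1 \<and>
     \<comment> \<open>antipode\<close>
     (\<forall>l c. (\<Sum>i\<in>UNIV. \<Sum>j\<in>UNIV. \<Sum>m\<in>UNIV. dc H l i j * sc H i m * mc H m j c) = ep H l * un H c) \<and>
     (\<forall>l c. (\<Sum>i\<in>UNIV. \<Sum>j\<in>UNIV. \<Sum>m\<in>UNIV. dc H l i j * sc H j m * mc H i m c) = ep H l * un H c)"

definition hmult :: "('b::finite, 'k::field) hopf \<Rightarrow> ('b \<Rightarrow> 'k) \<Rightarrow> ('b \<Rightarrow> 'k) \<Rightarrow> ('b \<Rightarrow> 'k)" where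
  "hmult H x y = (\<lambda>l. \<Sum>i\<in>UNIV. \<Sum>j\<in>UNIV. x i * y j * mc H i j l)"

definition hcomult :: "('b::finite, 'k::field) hopf \<Rightarrow> ('b \<Rightarrow> 'k) \<Rightarrow> ('b \<Rightarrow> 'b \<Rightarrow> 'k)" where
  "hcomult H x = (\<lambda>i j. \<Sum>l\<in>UNIV. x l * dc H l i j)"

definition hantipode :: "('b::finite, 'k::field) hopf \<Rightarrow> ('b \<Rightarrow> 'k) \<Rightarrow> ('b \<Rightarrow> 'k)" where
  "hantipode H x = (\<lambda>m. \<Sum>i\<in>UNIV. x i * sc H i m)"

definition tensor_span :: "('b \<Rightarrow> 'k::field) set \<Rightarrow> ('b \<Rightarrow> 'b \<Rightarrow> 'k) set" where
  "tensor_span J = {t. \<exists>(n::nat) f g. (\<forall>q<n. f q \<in> J \<and> g q \<in> J) \<and>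
                          t = (\<lambda>i j. \<Sum>q<n. f q i * g q j)}"

text \<open>Subgroup schemes J of H correspond to Hopf subalgebras kJ of kH.\<close>
definition subgroup_scheme :: "('b::finite, 'k::field) hopf \<Rightarrow> ('b \<Rightarrow> 'k) set \<Rightarrow> bool" where
  "subgroup_scheme H J \<longleftrightarrow>
     0 \<in> J \<and> (\<forall>x\<in>J. \<forall>y\<in>J. x + y \<in> J) \<and> (\<forall>c. \<forall>x\<in>J. (\<lambda>i. c * x i) \<in> J) \<and>
     un H \<in> J \<and> (\<forall>x\<in>J. \<forall>y\<in>J. hmult H x y \<in> J) \<and>
     (\<forall>x\<in>J. hcomult H x \<in> tensor_span J) \<and> (\<forall>x\<in>J. hantipode H x \<in> J)"

text \<open>A module over the subalgebra S of kH (S = UNIV: kH-modules; S = kJ: kJ-modules),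
carried by a subset of an abelian group type 'v.  A kG-module (G = H x C, C cyclic of
order p) is such a module together with an S-linear endomorphism Z with Z^p = 0.\<close>

record ('v, 'b, 'k) hmod =
  car :: "'v set"
  act :: "('b \<Rightarrow> 'k) \<Rightarrow> 'v \<Rightarrow> 'v"

record ('v, 'b, 'k) gmod = "('v, 'b, 'k) hmod" +
  zop :: "'v \<Rightarrow> 'v"

definition is_hmod :: "('b::finite, 'k::field) hopf \<Rightarrow> ('b \<Rightarrow> 'k) set
    \<Rightarrow> ('v::ab_group_add, 'b, 'k, 'z) hmod_scheme \<Rightarrow> bool" where
  "is_hmod H S M \<longleftrightarrow>
     0 \<in> car M \<and> (\<forall>v\<in>car M. \<forall>w\<in>car M. v + w \<in> car M) \<and> (\<forall>v\<in>car M. - v \<in> car M) \<and>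
     (\<forall>a\<in>S. \<forall>v\<in>car M. act M a v \<in> car M) \<and>
     (\<forall>a\<in>S. \<forall>v\<in>car M. \<forall>w\<in>car M. act M a (v + w) = act M a v + act M a w) \<and>
     (\<forall>a\<in>S. \<forall>b\<in>S. \<forall>v\<in>car M. act M (a + b) v = act M a v + act M b v) \<and>
     (\<forall>a\<in>S. \<forall>b\<in>S. \<forall>v\<in>car M. act M (hmult H a b) v = act M a (act M b v)) \<and>
     (\<forall>v\<in>car M. act M (un H) v = v)"

definition is_gmod :: "nat \<Rightarrow> ('b::finite, 'k::field) hopf \<Rightarrow> ('b \<Rightarrow> 'k) set
    \<Rightarrow> ('v::ab_group_add, 'b, 'k) gmod \<Rightarrow> bool" where
  "is_gmod p H S M \<longleftrightarrow> is_hmod H S M \<and>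
     (\<forall>v\<in>car M. zop M v \<in> car M) \<and>
     (\<forall>v\<in>car M. \<forall>w\<in>car M. zop M (v + w) = zop M v + zop M w) \<and>
     (\<forall>a\<in>S. \<forall>v\<in>car M. zop M (act M a v) = act M a (zop M v)) \<and>
     (\<forall>v\<in>car M. (zop M ^^ p) v = 0)"

definition is_hhom :: "('b \<Rightarrow> 'k) set \<Rightarrow> ('v::ab_group_add, 'b, 'k, 'z1) hmod_scheme
    \<Rightarrow> ('w::ab_group_add, 'b, 'k, 'z2) hmod_scheme \<Rightarrow> ('v \<Rightarrow> 'w) \<Rightarrow> bool" where
  "is_hhom S M N f \<longleftrightarrow> (\<forall>v\<in>car M. f v \<in> car N) \<and>
     (\<forall>v\<in>car M. \<forall>w\<in>car M. f (v + w) = f v + f w) \<and>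
     (\<forall>a\<in>S. \<forall>v\<in>car M. f (act M a v) = act N a (f v))"

definition is_ghom :: "('b \<Rightarrow> 'k) set \<Rightarrow> ('v::ab_group_add, 'b, 'k) gmod
    \<Rightarrow> ('w::ab_group_add, 'b, 'k) gmod \<Rightarrow> ('v \<Rightarrow> 'w) \<Rightarrow> bool" where
  "is_ghom S M N f \<longleftrightarrow> is_hhom S M N f \<and> (\<forall>v\<in>car M. f (zop M v) = zop N (f v))"

definition is_giso :: "('b \<Rightarrow> 'k) set \<Rightarrow> ('v::ab_group_add, 'b, 'k) gmod
    \<Rightarrow> ('w::ab_group_add, 'b, 'k) gmod \<Rightarrow> ('v \<Rightarrow> 'w) \<Rightarrow> bool" where
  "is_giso S M N f \<longleftrightarrow> is_ghom S M N f \<and> bij_betw f (car M) (car N)"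

definition gsum :: "('v::ab_group_add, 'b, 'k) gmod \<Rightarrow> ('w::ab_group_add, 'b, 'k) gmod
    \<Rightarrow> ('v \<times> 'w, 'b, 'k) gmod" where
  "gsum M N = \<lparr> car = car M \<times> car N,
                act = (\<lambda>a (v, w). (act M a v, act N a w)),
                zop = (\<lambda>(v, w). (zop M v, zop N w)) \<rparr>"

definition gres :: "('b \<Rightarrow> 'k) set \<Rightarrow> ('v::ab_group_add, 'b, 'k) gmod \<Rightarrow> ('v, 'b, 'k) gmod" where
  "gres J M = M \<lparr> act := (\<lambda>a v. if a \<in> J then act M a v else 0) \<rparr>"

definition hfree :: "('b::finite, 'k::field) hopf \<Rightarrow> 'v set \<Rightarrow> ('v \<Rightarrow> 'b \<Rightarrow> 'k, 'b, 'k) hmod" where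
  "hfree H X = \<lparr> car = {f. finite {v. f v \<noteq> 0} \<and> (\<forall>v. v \<notin> X \<longrightarrow> f v = 0)},
                 act = (\<lambda>a f v. hmult H a (f v)) \<rparr>"

text \<open>Free kG-module with basis X, where kG = kH (x) k[Z]/(Z^p): an element of kG is
written sum_{j<p} a_j Z^j, stored as j |-> a_j.\<close>
definition gfree :: "nat \<Rightarrow> ('b::finite, 'k::field) hopf \<Rightarrow> 'v set
    \<Rightarrow> ('v \<Rightarrow> nat \<Rightarrow> 'b \<Rightarrow> 'k, 'b, 'k) gmod" where
  "gfree p H X = \<lparr> car = {f. finite {(v, j). f v j \<noteq> 0} \<and>
                             (\<forall>v j. v \<notin> X \<or> p \<le> j \<longrightarrow> f v j = 0)},
                   act = (\<lambda>a f v j. hmult H a (f v j)),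
                   zop = (\<lambda>f v j. if j = 0 \<or> p \<le> j then 0 else f v (j - 1)) \<rparr>"

text \<open>Projective = direct summand of a free module (here: the free module on the
underlying set, which suffices).\<close>
definition hproj :: "('b::finite, 'k::field) hopf \<Rightarrow> ('v::ab_group_add, 'b, 'k, 'z) hmod_scheme \<Rightarrow> bool" where
  "hproj H P \<longleftrightarrow> is_hmod H UNIV P \<and>
     (\<exists>i r. is_hhom UNIV P (hfree H (car P)) i \<and> is_hhom UNIV (hfree H (car P)) P r \<and>
            (\<forall>v\<in>car P. r (i v) = v))"

definition gproj :: "nat \<Rightarrow> ('b::finite, 'k::field) hopf \<Rightarrow> ('v::ab_group_add, 'b, 'k) gmod \<Rightarrow> bool" where
  "gproj p H P \<longleftrightarrow> is_gmod p H UNIV P \<and>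
     (\<exists>i r. is_ghom UNIV P (gfree p H (car P)) i \<and> is_ghom UNIV (gfree p H (car P)) P r \<and>
            (\<forall>v\<in>car P. r (i v) = v))"

text \<open>A kG-map f : M -> N is zero in StMod(kG) iff it factors through a projective
module.  Every such map factors through a projective (indeed free) module carried by
the type 'w => nat => 'b => 'k (the free module on the carrier of N), so we fix this
carrier type for the witness.\<close>
definition stably_zero :: "nat \<Rightarrow> ('b::finite, 'k::field) hopf \<Rightarrow> ('v::ab_group_add, 'b, 'k) gmod
    \<Rightarrow> ('w::ab_group_add, 'b, 'k) gmod \<Rightarrow> ('v \<Rightarrow> 'w) \<Rightarrow> bool" where
  "stably_zero p H M N f \<longleftrightarrow>
     (\<exists>(P :: ('w \<Rightarrow> nat \<Rightarrow> 'b \<Rightarrow> 'k, 'b, 'k) gmod) \<alpha> \<beta>. gproj p H P \<and>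
        is_ghom UNIV M P \<alpha> \<and> is_ghom UNIV P N \<beta> \<and> (\<forall>v\<in>car M. f v = \<beta> (\<alpha> v)))"

definition stable_iso :: "nat \<Rightarrow> ('b::finite, 'k::field) hopf \<Rightarrow> ('v::ab_group_add, 'b, 'k) gmod
    \<Rightarrow> ('w::ab_group_add, 'b, 'k) gmod \<Rightarrow> bool" where
  "stable_iso p H M N \<longleftrightarrow>
     (\<exists>f g. is_ghom UNIV M N f \<and> is_ghom UNIV N M g \<and>
        stably_zero p H M M (\<lambda>v. g (f v) - v) \<and> stably_zero p H N N (\<lambda>w. f (g w) - w))"

text \<open>cc i is C_i, cact i its action, dd (Suc i) : C_(i+1) -> C_i the differential
(dd 0 is unused: C_0 -> 0).\<close>
record ('c, 'b, 'k) cx =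
  cc :: "nat \<Rightarrow> 'c set"
  cact :: "nat \<Rightarrow> ('b \<Rightarrow> 'k) \<Rightarrow> 'c \<Rightarrow> 'c"
  dd :: "nat \<Rightarrow> 'c \<Rightarrow> 'c"

definition cx_deg :: "('c, 'b, 'k) cx \<Rightarrow> nat \<Rightarrow> ('c, 'b, 'k) hmod" where
  "cx_deg C i = \<lparr> car = cc C i, act = cact C i \<rparr>"

definition is_cx :: "('b::finite, 'k::field) hopf \<Rightarrow> ('b \<Rightarrow> 'k) set \<Rightarrow> ('c::ab_group_add, 'b, 'k) cx \<Rightarrow> bool" where
  "is_cx H S C \<longleftrightarrow> (\<forall>i. is_hmod H S (cx_deg C i)) \<and>
     (\<forall>i. is_hhom S (cx_deg C (Suc i)) (cx_deg C i) (dd C (Suc i))) \<and>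
     (\<forall>i. \<forall>x\<in>cc C (Suc (Suc i)). dd C (Suc i) (dd C (Suc (Suc i)) x) = 0)"

definition is_chain_map :: "('b \<Rightarrow> 'k) set \<Rightarrow> ('c::ab_group_add, 'b, 'k) cx \<Rightarrow> ('d::ab_group_add, 'b, 'k) cx
    \<Rightarrow> (nat \<Rightarrow> 'c \<Rightarrow> 'd) \<Rightarrow> bool" where
  "is_chain_map S C D \<sigma> \<longleftrightarrow> (\<forall>i. is_hhom S (cx_deg C i) (cx_deg D i) (\<sigma> i)) \<and>
     (\<forall>i. \<forall>x\<in>cc C (Suc i). \<sigma> i (dd C (Suc i) x) = dd D (Suc i) (\<sigma> (Suc i) x))"

definition cx_sum :: "('c, 'b, 'k) cx \<Rightarrow> ('d, 'b, 'k) cx \<Rightarrow> ('c \<times> 'd, 'b, 'k) cx" where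
  "cx_sum C D = \<lparr> cc = (\<lambda>i. cc C i \<times> cc D i),
                  cact = (\<lambda>i a (x, y). (cact C i a x, cact D i a y)),
                  dd = (\<lambda>i (x, y). (dd C i x, dd D i y)) \<rparr>"

definition cx_res :: "('b \<Rightarrow> 'k) set \<Rightarrow> ('c::zero, 'b, 'k) cx \<Rightarrow> ('c, 'b, 'k) cx" where
  "cx_res J C = C \<lparr> cact := (\<lambda>i a x. if a \<in> J then cact C i a x else 0) \<rparr>"

text \<open>Exact complex (including exactness at C_0, i.e. dd 1 onto C_0).\<close>
definition cx_exact :: "('c::ab_group_add, 'b, 'k) cx \<Rightarrow> bool" where
  "cx_exact C \<longleftrightarrow> (\<forall>i. {x \<in> cc C i. i = 0 \<or> dd C i x = 0} = dd C (Suc i) ` cc C (Suc i))"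

definition proj_resolution :: "('b::finite, 'k::field) hopf \<Rightarrow> ('c::ab_group_add, 'b, 'k) cx
    \<Rightarrow> ('n::ab_group_add, 'b, 'k) hmod \<Rightarrow> ('c \<Rightarrow> 'n) \<Rightarrow> bool" where
  "proj_resolution H C N eps \<longleftrightarrow> is_cx H UNIV C \<and> is_hmod H UNIV N \<and>
     (\<forall>i. hproj H (cx_deg C i)) \<and>
     is_hhom UNIV (cx_deg C 0) N eps \<and> eps ` cc C 0 = car N \<and>
     {x \<in> cc C 0. eps x = 0} = dd C 1 ` cc C 1 \<and>
     (\<forall>i. {x \<in> cc C (Suc i). dd C (Suc i) x = 0} = dd C (Suc (Suc i)) ` cc C (Suc (Suc i)))"

text \<open>An element of M(C_*, n) is stored as x :: nat => nat => 'c where x i j is the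
j-th coordinate in the summand of degree i: for i even there is one coordinate
(j = 0), for i odd there are p - 1 coordinates (j < p - 1), i.e. C_i^(p-1).  Only
degrees i < 2n occur (n = infinity allowed, n :: enat), with finite support.\<close>
definition Mcar :: "nat \<Rightarrow> ('c::ab_group_add, 'b, 'k) cx \<Rightarrow> enat \<Rightarrow> (nat \<Rightarrow> nat \<Rightarrow> 'c) set" where
  "Mcar p C n = {x. finite {(i, j). x i j \<noteq> 0} \<and>
      (\<forall>i j. if enat i < 2 * n \<and> (if odd i then j < p - 1 else j = 0)
             then x i j \<in> cc C i else x i j = 0)}"

text \<open>Z-action: on C_i^(p-1) (i odd), (m_1..m_(p-1)) |-> (0, m_1, .., m_(p-2)) + d(m_(p-1));
on C_(2j), j > 0, m |-> (d m, 0, .., 0); on C_0 zero.  Written componentwise.\<close>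
definition MZ :: "nat \<Rightarrow> ('c::ab_group_add, 'b, 'k) cx \<Rightarrow> (nat \<Rightarrow> nat \<Rightarrow> 'c) \<Rightarrow> (nat \<Rightarrow> nat \<Rightarrow> 'c)" where
  "MZ p C x = (\<lambda>i j.
     if odd i then
       (if j = 0 then dd C (Suc i) (x (Suc i) 0)
        else if j < p - 1 then x i (j - 1) else 0)
     else
       (if j = 0 then dd C (Suc i) (x (Suc i) (p - 2)) else 0))"

definition Mmod :: "nat \<Rightarrow> ('c::ab_group_add, 'b, 'k) cx \<Rightarrow> enat \<Rightarrow> (nat \<Rightarrow> nat \<Rightarrow> 'c, 'b, 'k) gmod" where
  "Mmod p C n = \<lparr> car = Mcar p C n,
                  act = (\<lambda>a x i j. cact C i a (x i j)),
                  zop = MZ p C \<rparr>"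

definition Mmap :: "(nat \<Rightarrow> 'c \<Rightarrow> 'd) \<Rightarrow> (nat \<Rightarrow> nat \<Rightarrow> 'c) \<Rightarrow> (nat \<Rightarrow> nat \<Rightarrow> 'd)" where
  "Mmap \<sigma> x = (\<lambda>i j. \<sigma> i (x i j))"

end

theory Submission
  imports Defs
begin

text \<open>
  Restricted to \<open>kH\<close>, \<open>M(C\<^sub>*, n)\<close> is a direct sum of copies of the \<open>C\<^sub>i\<close> and \<open>Z\<close> is
  built from the differentials, so parts (1)--(3) hold componentwise.

  For a \<open>kH\<close>-linear map \<open>\<theta>\<close> between
  \<open>kG\<close>-modules, the \<open>Z\<close>-trace \<open>\<Sum>l<p. Z\<^sup>l \<theta> Z\<^sup>p\<^sup>-\<^sup>1\<^sup>-\<^sup>l\<close> is \<open>kG\<close>-linear, and if the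
  source is a \<open>kH\<close>-summand of a free \<open>kH\<close>-module it factors through the induced free
  \<open>kG\<close>-module, so it is zero in \<open>StMod(kG)\<close>. A family \<open>h\<^sub>i : C\<^sub>i \<rightarrow> D\<^sub>i\<^sub>+\<^sub>1\<close> of
  \<open>kH\<close>-maps induces a \<open>kH\<close>-linear map \<open>\<theta>\<^sub>h : M(C\<^sub>*, \<infinity>) \<rightarrow> M(D\<^sub>*, \<infinity>)\<close> whose \<open>Z\<close>-trace is
  \<open>M(dh + hd)\<close>. Hence null-homotopic chain maps out of complexes of projectives induce
  stably zero maps. An exact complex of projectives is contractible, which gives (4); two
  projective resolutions of \<open>N\<close> are homotopy equivalent over \<open>N\<close>, which gives (5).
\<close>

lemma sum_fun_apply: "(\<Sum>x\<in>A. f x) y = (\<Sum>x\<in>A. f x y)"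
  by (induction A rule: infinite_finite_induct) auto

lemma sum_mult_kron: "(\<Sum>i\<in>UNIV. (a::'b::finite \<Rightarrow> 'k::field) i * kron i l) = a l"
  by (simp add: kron_def if_distrib[where f="\<lambda>x. _ * x"] cong: if_cong)

lemma hmult_zero_right [simp]: "hmult H a 0 = 0"
  by (simp add: hmult_def fun_eq_iff)

lemma hmult_add_left: "hmult H (a + b) c = hmult H a c + hmult H b c"
  and hmult_add_right: "hmult H a (b + c) = hmult H a b + hmult H a c"
  by (simp_all add: hmult_def fun_eq_iff algebra_simps sum.distrib)

lemma hmult_hmult_left:
  "hmult H (hmult H a b) c m =
     (\<Sum>i\<in>UNIV. \<Sum>j\<in>UNIV. \<Sum>k\<in>UNIV. a i * b j * c k * (\<Sum>l\<in>UNIV. mc H i j l * mc H l k m))"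
proof -
  have "hmult H (hmult H a b) c m =
      (\<Sum>l\<in>UNIV. \<Sum>k\<in>UNIV. \<Sum>i\<in>UNIV. \<Sum>j\<in>UNIV. a i * b j * c k * (mc H i j l * mc H l k m))"
    by (simp add: hmult_def sum_distrib_left sum_distrib_right mult_ac)
  also have "\<dots> =
      (\<Sum>i\<in>UNIV. \<Sum>j\<in>UNIV. \<Sum>k\<in>UNIV. \<Sum>l\<in>UNIV. a i * b j * c k * (mc H i j l * mc H l k m))"
    by (subst sum.swap, subst (2) sum.swap, subst (3) sum.swap, subst (4) sum.swap)
      (subst sum.swap, rule refl)
  finally show ?thesis by (simp add: sum_distrib_left)
qed

lemma hmult_hmult_right:
  "hmult H a (hmult H b c) m =
     (\<Sum>i\<in>UNIV. \<Sum>j\<in>UNIV. \<Sum>k\<in>UNIV. a i * b j * c k * (\<Sum>l\<in>UNIV. mc H j k l * mc H i l m))"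
proof -
  have "hmult H a (hmult H b c) m =
      (\<Sum>i\<in>UNIV. \<Sum>l\<in>UNIV. \<Sum>j\<in>UNIV. \<Sum>k\<in>UNIV. a i * b j * c k * (mc H j k l * mc H i l m))"
    by (simp add: hmult_def sum_distrib_left sum_distrib_right mult_ac)
  also have "\<dots> =
      (\<Sum>i\<in>UNIV. \<Sum>j\<in>UNIV. \<Sum>k\<in>UNIV. \<Sum>l\<in>UNIV. a i * b j * c k * (mc H j k l * mc H i l m))"
    by (subst (2) sum.swap, subst (3) sum.swap) (rule refl)
  finally show ?thesis by (simp add: sum_distrib_left)
qed

context
  fixes H :: "('b::finite, 'k::field) hopf"
  assumes H: "finite_group_scheme H"
begin

lemma hmult_assoc: "hmult H (hmult H a b) c = hmult H a (hmult H b c)"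
  using H by (simp add: fun_eq_iff hmult_hmult_left hmult_hmult_right finite_group_scheme_def)

lemma hmult_unit_left: "hmult H (un H) a = a"
proof
  fix l
  have "hmult H (un H) a l = (\<Sum>j\<in>UNIV. a j * (\<Sum>i\<in>UNIV. un H i * mc H i j l))"
    unfolding hmult_def by (subst sum.swap) (simp add: sum_distrib_left mult_ac)
  then show "hmult H (un H) a l = a l"
    using H by (simp add: finite_group_scheme_def sum_mult_kron)
qed

lemma hmult_unit_right: "hmult H a (un H) = a"
proof
  fix l
  have "hmult H a (un H) l = (\<Sum>i\<in>UNIV. a i * (\<Sum>j\<in>UNIV. un H j * mc H i j l))"
    by (simp add: hmult_def sum_distrib_left mult.assoc)
  then show "hmult H a (un H) l = a l"
    using H by (simp add: finite_group_scheme_def sum_mult_kron)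
qed

end

context
  fixes H :: "('b::finite, 'k::field) hopf" and S
    and M :: "('v::ab_group_add, 'b, 'k, 'z) hmod_scheme"
  assumes M: "is_hmod H S M"
begin

lemma hmod_zero: "0 \<in> car M"
  and hmod_add: "v \<in> car M \<Longrightarrow> w \<in> car M \<Longrightarrow> v + w \<in> car M"
  and hmod_uminus: "v \<in> car M \<Longrightarrow> - v \<in> car M"
  and hmod_act: "a \<in> S \<Longrightarrow> v \<in> car M \<Longrightarrow> act M a v \<in> car M"
  and hmod_act_add: "a \<in> S \<Longrightarrow> v \<in> car M \<Longrightarrow> w \<in> car M \<Longrightarrow> act M a (v + w) = act M a v + act M a w"
  and hmod_add_act: "a \<in> S \<Longrightarrow> b \<in> S \<Longrightarrow> v \<in> car M \<Longrightarrow> act M (a + b) v = act M a v + act M b v"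
  and hmod_mult_act: "a \<in> S \<Longrightarrow> b \<in> S \<Longrightarrow> v \<in> car M \<Longrightarrow> act M (hmult H a b) v = act M a (act M b v)"
  and hmod_un_act: "v \<in> car M \<Longrightarrow> act M (un H) v = v"
  using M by (simp_all add: is_hmod_def)

lemma hmod_diff: "v \<in> car M \<Longrightarrow> w \<in> car M \<Longrightarrow> v - w \<in> car M"
  using hmod_add hmod_uminus by (metis diff_conv_add_uminus)

lemma hmod_sum: "(\<And>x. x \<in> A \<Longrightarrow> f x \<in> car M) \<Longrightarrow> sum f A \<in> car M"
  by (induction A rule: infinite_finite_induct) (auto simp: hmod_zero hmod_add)

lemma hmod_act_zero: "a \<in> S \<Longrightarrow> act M a 0 = 0"
  using hmod_act_add[of a 0 0] hmod_zero by simp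

lemma hmod_zero_act: "0 \<in> S \<Longrightarrow> v \<in> car M \<Longrightarrow> act M 0 v = 0"
  using hmod_add_act[of 0 0 v] by simp

lemma hmod_act_uminus: "a \<in> S \<Longrightarrow> v \<in> car M \<Longrightarrow> act M a (- v) = - act M a v"
  using hmod_act_add[of a v "- v"] hmod_act_zero hmod_uminus
  by (simp add: eq_neg_iff_add_eq_0 add.commute)

lemma hmod_act_diff: "a \<in> S \<Longrightarrow> v \<in> car M \<Longrightarrow> w \<in> car M \<Longrightarrow> act M a (v - w) = act M a v - act M a w"
  using hmod_act_add[of a v "- w"] hmod_act_uminus hmod_uminus by simp

lemma hmod_act_sum: "a \<in> S \<Longrightarrow> (\<And>x. x \<in> A \<Longrightarrow> f x \<in> car M) \<Longrightarrow> act M a (sum f A) = (\<Sum>x\<in>A. act M a (f x))"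
  by (induction A rule: infinite_finite_induct) (auto simp: hmod_act_zero hmod_act_add hmod_sum)

end

lemma hhom_car: "is_hhom S M N f \<Longrightarrow> v \<in> car M \<Longrightarrow> f v \<in> car N"
  and hhom_add: "is_hhom S M N f \<Longrightarrow> v \<in> car M \<Longrightarrow> w \<in> car M \<Longrightarrow> f (v + w) = f v + f w"
  and hhom_act: "is_hhom S M N f \<Longrightarrow> a \<in> S \<Longrightarrow> v \<in> car M \<Longrightarrow> f (act M a v) = act N a (f v)"
  by (simp_all add: is_hhom_def)

lemma hhom_comp: "is_hhom S M N f \<Longrightarrow> is_hhom S N P g \<Longrightarrow> is_hhom S M P (\<lambda>v. g (f v))"
  by (simp add: is_hhom_def)

context
  fixes H :: "('b::finite, 'k::field) hopf" and S'
    and M :: "('v::ab_group_add, 'b, 'k, 'z) hmod_scheme"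
    and N :: "('w::ab_group_add, 'b, 'k, 'z2) hmod_scheme" and f S
  assumes M: "is_hmod H S' M" and f: "is_hhom S M N f"
begin

lemma hhom_zero: "f 0 = 0"
  using hhom_add[OF f hmod_zero[OF M] hmod_zero[OF M]] by simp

lemma hhom_uminus: "v \<in> car M \<Longrightarrow> f (- v) = - f v"
  using hhom_add[OF f, of v "- v"] hhom_zero hmod_uminus[OF M]
  by (simp add: eq_neg_iff_add_eq_0 add.commute)

lemma hhom_diff: "v \<in> car M \<Longrightarrow> w \<in> car M \<Longrightarrow> f (v - w) = f v - f w"
  using hhom_add[OF f, of v "- w"] hhom_uminus hmod_uminus[OF M] by simp

lemma hhom_sum: "(\<And>x. x \<in> A \<Longrightarrow> g x \<in> car M) \<Longrightarrow> f (sum g A) = (\<Sum>x\<in>A. f (g x))"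
  by (induction A rule: infinite_finite_induct) (auto simp: hhom_zero hhom_add[OF f] hmod_sum[OF M])

end

lemma hhom_minus:
  assumes N: "is_hmod H S N" and f: "is_hhom S M N f" and g: "is_hhom S M N g"
  shows "is_hhom S M N (\<lambda>v. f v - g v)"
  using f g unfolding is_hhom_def by (auto simp: hmod_diff[OF N] hmod_act_diff[OF N] algebra_simps)

lemma ghom_hhom: "is_ghom S M N f \<Longrightarrow> is_hhom S M N f"
  and ghom_zop: "is_ghom S M N f \<Longrightarrow> v \<in> car M \<Longrightarrow> f (zop M v) = zop N (f v)"
  by (simp_all add: is_ghom_def)

lemma ghom_comp: "is_ghom S M N f \<Longrightarrow> is_ghom S N P g \<Longrightarrow> is_ghom S M P (\<lambda>v. g (f v))"
  by (simp add: is_ghom_def is_hhom_def)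

context
  fixes p H S and M :: "('v::ab_group_add, 'b::finite, 'k::field) gmod"
  assumes M: "is_gmod p H S M"
begin

lemma gmod_hmod: "is_hmod H S M"
  and gmod_zop: "v \<in> car M \<Longrightarrow> zop M v \<in> car M"
  and gmod_zop_nilpotent: "v \<in> car M \<Longrightarrow> (zop M ^^ p) v = 0"
  and gmod_zop_hhom: "is_hhom S M M (zop M)"
  using M by (simp_all add: is_gmod_def is_hhom_def)

lemma gmod_zpow: "v \<in> car M \<Longrightarrow> (zop M ^^ n) v \<in> car M"
  by (induction n) (auto simp: gmod_zop)

lemma gmod_zpow_hhom: "is_hhom S M M (zop M ^^ n)"
proof (induction n)
  case 0
  then show ?case by (simp add: is_hhom_def)
next
  case (Suc n)
  then show ?case using hhom_comp[OF Suc gmod_zop_hhom] by (simp add: comp_def)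
qed

end

lemma ghom_zpow:
  assumes f: "is_ghom S M N f" and M: "is_gmod p H S' M" and v: "v \<in> car M"
  shows "f ((zop M ^^ n) v) = (zop N ^^ n) (f v)"
  by (induction n) (simp_all add: ghom_zop[OF f] gmod_zpow[OF M v])

definition hfree_basis :: "('b, 'k::zero) hopf \<Rightarrow> 'x \<Rightarrow> 'x \<Rightarrow> 'b \<Rightarrow> 'k" where
  "hfree_basis H x = (\<lambda>y. if y = x then un H else 0)"

definition hfree_ext :: "('v::ab_group_add, 'b, 'k, 'z) hmod_scheme \<Rightarrow> ('x \<Rightarrow> 'v)
    \<Rightarrow> ('x \<Rightarrow> 'b \<Rightarrow> 'k::zero) \<Rightarrow> 'v" where
  "hfree_ext N \<phi> F = (\<Sum>x\<in>{x. F x \<noteq> 0}. act N (F x) (\<phi> x))"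

lemma hfree_car: "F \<in> car (hfree H X) \<longleftrightarrow> finite {v. F v \<noteq> 0} \<and> (\<forall>v. v \<notin> X \<longrightarrow> F v = 0)"
  by (simp add: hfree_def)

lemma hfree_act: "act (hfree H X) a F = (\<lambda>v. hmult H a (F v))"
  by (simp add: hfree_def)

lemma hfree_support: "F \<in> car (hfree H X) \<Longrightarrow> {v. F v \<noteq> 0} \<subseteq> X"
  by (auto simp: hfree_car)

lemma hfree_basis_car: "x \<in> X \<Longrightarrow> hfree_basis H x \<in> car (hfree H X)"
  by (auto simp: hfree_car hfree_basis_def intro: finite_subset[of _ "{x}"])

context
  fixes H :: "('b::finite, 'k::field) hopf" and N :: "('v::ab_group_add, 'b, 'k, 'z) hmod_scheme"
  assumes N: "is_hmod H UNIV N"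
begin

lemma hfree_ext_eq_sum:
  assumes "finite A" "{x. F x \<noteq> 0} \<subseteq> A" and "\<And>x. x \<in> A \<Longrightarrow> \<phi> x \<in> car N"
  shows "hfree_ext N \<phi> F = (\<Sum>x\<in>A. act N (F x) (\<phi> x))"
  unfolding hfree_ext_def
  by (rule sum.mono_neutral_left) (use assms hmod_zero_act[OF N] in auto)

lemma hfree_ext_cong:
  assumes "F \<in> car (hfree H X)" and "\<And>x. x \<in> X \<Longrightarrow> \<phi> x = \<psi> x"
  shows "hfree_ext N \<phi> F = hfree_ext N \<psi> F"
  unfolding hfree_ext_def using hfree_support[OF assms(1)] assms(2) by (intro sum.cong) auto

lemma hfree_ext_hhom:
  assumes phi: "\<And>x. x \<in> X \<Longrightarrow> \<phi> x \<in> car N"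
  shows "is_hhom UNIV (hfree H X) N (hfree_ext N \<phi>)"
  unfolding is_hhom_def
proof (intro conjI ballI)
  fix F assume F: "F \<in> car (hfree H X)"
  show "hfree_ext N \<phi> F \<in> car N"
    unfolding hfree_ext_def using hfree_support[OF F] phi
    by (intro hmod_sum[OF N] hmod_act[OF N]) auto
next
  fix F G assume F: "F \<in> car (hfree H X)" and G: "G \<in> car (hfree H X)"
  let ?A = "{x. F x \<noteq> 0} \<union> {x. G x \<noteq> 0}"
  have fin: "finite ?A" using F G by (simp add: hfree_car)
  have phA: "\<And>x. x \<in> ?A \<Longrightarrow> \<phi> x \<in> car N"
    using hfree_support[OF F] hfree_support[OF G] phi by blast
  have "hfree_ext N \<phi> (F + G) = (\<Sum>x\<in>?A. act N ((F + G) x) (\<phi> x))"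
    by (rule hfree_ext_eq_sum[OF fin _ phA]) auto
  also have "\<dots> = (\<Sum>x\<in>?A. act N (F x) (\<phi> x)) + (\<Sum>x\<in>?A. act N (G x) (\<phi> x))"
    unfolding sum.distrib[symmetric] by (rule sum.cong) (use phA hmod_add_act[OF N] in auto)
  also have "\<dots> = hfree_ext N \<phi> F + hfree_ext N \<phi> G"
    using hfree_ext_eq_sum[OF fin _ phA, of F] hfree_ext_eq_sum[OF fin _ phA, of G] by auto
  finally show "hfree_ext N \<phi> (F + G) = hfree_ext N \<phi> F + hfree_ext N \<phi> G" .
next
  fix a F assume F: "F \<in> car (hfree H X)"
  let ?A = "{x. F x \<noteq> 0}"
  have fin: "finite ?A" using F by (simp add: hfree_car)
  have phA: "\<And>x. x \<in> ?A \<Longrightarrow> \<phi> x \<in> car N" using hfree_support[OF F] phi by blast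
  have "hfree_ext N \<phi> (act (hfree H X) a F) = (\<Sum>x\<in>?A. act N (hmult H a (F x)) (\<phi> x))"
    by (subst hfree_ext_eq_sum[OF fin _ phA]) (auto simp: hfree_act)
  also have "\<dots> = (\<Sum>x\<in>?A. act N a (act N (F x) (\<phi> x)))"
    by (rule sum.cong) (use phA hmod_mult_act[OF N] in auto)
  also have "\<dots> = act N a (hfree_ext N \<phi> F)"
    unfolding hfree_ext_def using phA
    by (subst hmod_act_sum[OF N]) (auto intro: hmod_act[OF N])
  finally show "hfree_ext N \<phi> (act (hfree H X) a F) = act N a (hfree_ext N \<phi> F)" .
qed

lemma hfree_ext_basis:
  assumes phi: "\<phi> x \<in> car N"
  shows "hfree_ext N \<phi> (hfree_basis H x) = \<phi> x"
proof -
  have "hfree_ext N \<phi> (hfree_basis H x) = (\<Sum>y\<in>{x}. act N (hfree_basis H x y) (\<phi> y))"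
    by (rule hfree_ext_eq_sum) (use phi in \<open>auto simp: hfree_basis_def\<close>)
  also have "\<dots> = \<phi> x" using hmod_un_act[OF N phi] by (simp add: hfree_basis_def)
  finally show ?thesis .
qed

end

context
  fixes H :: "('b::finite, 'k::field) hopf"
  assumes H: "finite_group_scheme H"
begin

lemma hfree_hmod: "is_hmod H UNIV (hfree H X)"
  unfolding is_hmod_def
proof (intro conjI ballI)
  show "0 \<in> car (hfree H X)" by (simp add: hfree_car)
next
  fix F G assume F: "F \<in> car (hfree H X)" and G: "G \<in> car (hfree H X)"
  show "F + G \<in> car (hfree H X)"
    using F G by (auto simp: hfree_car intro: finite_subset[of _ "{x. F x \<noteq> 0} \<union> {x. G x \<noteq> 0}"])
  fix a
  show "act (hfree H X) a (F + G) = act (hfree H X) a F + act (hfree H X) a G"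
    by (simp add: hfree_act hmult_add_right fun_eq_iff)
next
  fix F assume F: "F \<in> car (hfree H X)"
  show "- F \<in> car (hfree H X)" using F by (auto simp: hfree_car)
  fix a
  show "act (hfree H X) a F \<in> car (hfree H X)"
    using F by (auto simp: hfree_car hfree_act intro: finite_subset[of _ "{x. F x \<noteq> 0}"])
  fix b
  show "act (hfree H X) (a + b) F = act (hfree H X) a F + act (hfree H X) b F"
    by (simp add: hfree_act hmult_add_left fun_eq_iff)
  show "act (hfree H X) (hmult H a b) F = act (hfree H X) a (act (hfree H X) b F)"
    by (simp add: hfree_act hmult_assoc[OF H])
next
  fix F
  show "act (hfree H X) (un H) F = F" by (simp add: hfree_act hmult_unit_left[OF H])
qed

lemma hfree_sum_basis:
  assumes F: "F \<in> car (hfree H X)"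
  shows "F = (\<Sum>x\<in>{x. F x \<noteq> 0}. act (hfree H X) (F x) (hfree_basis H x))"
proof
  fix y
  have "(\<Sum>x\<in>{x. F x \<noteq> 0}. act (hfree H X) (F x) (hfree_basis H x)) y
      = (\<Sum>x\<in>{x. F x \<noteq> 0}. if x = y then F x else 0)"
    unfolding sum_fun_apply[of _ _ y]
    by (intro sum.cong) (auto simp: hfree_act hfree_basis_def hmult_unit_right[OF H])
  also have "\<dots> = F y" using F by (simp add: hfree_car sum.delta')
  finally show "F y = (\<Sum>x\<in>{x. F x \<noteq> 0}. act (hfree H X) (F x) (hfree_basis H x)) y" by simp
qed

lemma hhom_hfree_eq_ext:
  assumes N: "is_hmod H UNIV N" and h: "is_hhom UNIV (hfree H X) N h" and F: "F \<in> car (hfree H X)"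
  shows "h F = hfree_ext N (\<lambda>x. h (hfree_basis H x)) F"
proof -
  have basis: "hfree_basis H x \<in> car (hfree H X)" if "F x \<noteq> 0" for x
    using that hfree_support[OF F] by (blast intro: hfree_basis_car)
  have "h F = h (\<Sum>x\<in>{x. F x \<noteq> 0}. act (hfree H X) (F x) (hfree_basis H x))"
    using hfree_sum_basis[OF F] by simp
  also have "\<dots> = (\<Sum>x\<in>{x. F x \<noteq> 0}. h (act (hfree H X) (F x) (hfree_basis H x)))"
    by (rule hhom_sum[OF hfree_hmod h]) (simp add: hmod_act[OF hfree_hmod] basis)
  also have "\<dots> = (\<Sum>x\<in>{x. F x \<noteq> 0}. act N (F x) (h (hfree_basis H x)))"
    by (rule sum.cong) (simp_all add: hhom_act[OF h] basis)
  finally show ?thesis unfolding hfree_ext_def .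
qed

lemma hproj_lift:
  fixes P :: "('p::ab_group_add, 'b, 'k, 'z) hmod_scheme"
    and A :: "('a::ab_group_add, 'b, 'k, 'z1) hmod_scheme"
    and B :: "('c::ab_group_add, 'b, 'k, 'z2) hmod_scheme"
  assumes P: "hproj H P" and A: "is_hmod H UNIV A" and B: "is_hmod H UNIV B"
    and g: "is_hhom UNIV A B g" and f: "is_hhom UNIV P B f" and im: "f ` car P \<subseteq> g ` car A"
  shows "\<exists>f'. is_hhom UNIV P A f' \<and> (\<forall>v\<in>car P. g (f' v) = f v)"
proof -
  obtain i r where i: "is_hhom UNIV P (hfree H (car P)) i"
    and r: "is_hhom UNIV (hfree H (car P)) P r"
    and ri: "\<forall>v\<in>car P. r (i v) = v"
    using P by (auto simp: hproj_def)
  have "\<forall>x\<in>car P. \<exists>a. a \<in> car A \<and> g a = f (r (hfree_basis H x))"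
  proof
    fix x assume "x \<in> car P"
    then have "f (r (hfree_basis H x)) \<in> g ` car A"
      using im hhom_car[OF r hfree_basis_car] by blast
    then show "\<exists>a. a \<in> car A \<and> g a = f (r (hfree_basis H x))" by force
  qed
  from bchoice[OF this] obtain c
    where c: "\<forall>x\<in>car P. c x \<in> car A \<and> g (c x) = f (r (hfree_basis H x))" ..
  have e: "is_hhom UNIV (hfree H (car P)) A (hfree_ext A c)"
    by (rule hfree_ext_hhom[OF A]) (simp add: c)
  show ?thesis
  proof (intro exI conjI ballI)
    show "is_hhom UNIV P A (\<lambda>v. hfree_ext A c (i v))" using hhom_comp[OF i e] .
    fix v assume v: "v \<in> car P"
    have iv: "i v \<in> car (hfree H (car P))" using hhom_car[OF i v] .
    have "g (hfree_ext A c (i v)) = hfree_ext B (\<lambda>x. g (hfree_ext A c (hfree_basis H x))) (i v)"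
      using hhom_hfree_eq_ext[OF B hhom_comp[OF e g] iv] .
    also have "\<dots> = hfree_ext B (\<lambda>x. f (r (hfree_basis H x))) (i v)"
      by (rule hfree_ext_cong[OF B iv]) (simp add: hfree_ext_basis[OF A] c)
    also have "\<dots> = f (r (i v))" using hhom_hfree_eq_ext[OF B hhom_comp[OF r f] iv] by simp
    finally show "g (hfree_ext A c (i v)) = f v" using ri v by simp
  qed
qed

end

text \<open>Writing \<open>F = \<Sum>l<p. Z\<^sup>l F\<^sub>l\<close> with slices \<open>F\<^sub>l = (\<lambda>x. F x l)\<close> in \<open>hfree H X\<close>
  (lemma \<open>gfree_sum_zpow_slices\<close>) exhibits \<open>gfree p H X\<close> as the module induced from
  \<open>hfree H X\<close>; \<open>gfree_of_hfree\<close> is the inclusion of the slice \<open>l = 0\<close>.\<close>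

definition gfree_of_hfree :: "('x \<Rightarrow> 'b \<Rightarrow> 'k::zero) \<Rightarrow> 'x \<Rightarrow> nat \<Rightarrow> 'b \<Rightarrow> 'k" where
  "gfree_of_hfree G = (\<lambda>x j. if j = 0 then G x else 0)"

definition gfree_basis :: "('b, 'k::zero) hopf \<Rightarrow> 'x \<Rightarrow> 'x \<Rightarrow> nat \<Rightarrow> 'b \<Rightarrow> 'k" where
  "gfree_basis H x = gfree_of_hfree (hfree_basis H x)"

definition gfree_induce :: "nat \<Rightarrow> ('v::ab_group_add, 'b, 'k) gmod \<Rightarrow> (('x \<Rightarrow> 'b \<Rightarrow> 'k) \<Rightarrow> 'v)
    \<Rightarrow> ('x \<Rightarrow> nat \<Rightarrow> 'b \<Rightarrow> 'k) \<Rightarrow> 'v" where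
  "gfree_induce p N \<chi> F = (\<Sum>l<p. (zop N ^^ l) (\<chi> (\<lambda>x. F x l)))"

definition gfree_ext :: "nat \<Rightarrow> ('v::ab_group_add, 'b, 'k) gmod \<Rightarrow> ('x \<Rightarrow> 'v)
    \<Rightarrow> ('x \<Rightarrow> nat \<Rightarrow> 'b \<Rightarrow> 'k::zero) \<Rightarrow> 'v" where
  "gfree_ext p N \<phi> = gfree_induce p N (hfree_ext N \<phi>)"

lemma gfree_car:
  "F \<in> car (gfree p H X) \<longleftrightarrow> finite {(v, j). F v j \<noteq> 0} \<and> (\<forall>v j. v \<notin> X \<or> p \<le> j \<longrightarrow> F v j = 0)"
  by (simp add: gfree_def)

lemma gfree_act: "act (gfree p H X) a F = (\<lambda>v j. hmult H a (F v j))"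
  by (simp add: gfree_def)

lemma gfree_zop: "zop (gfree p H X) F = (\<lambda>v j. if j = 0 \<or> p \<le> j then 0 else F v (j - 1))"
  by (simp add: gfree_def)

lemma gfree_slice_car: "F \<in> car (gfree p H X) \<Longrightarrow> (\<lambda>x. F x l) \<in> car (hfree H X)"
proof -
  assume F: "F \<in> car (gfree p H X)"
  have "{x. F x l \<noteq> 0} = fst ` ({(v, j). F v j \<noteq> 0} \<inter> UNIV \<times> {l})" by force
  then have "finite {x. F x l \<noteq> 0}" using F by (simp add: gfree_car)
  then show ?thesis using F by (simp add: hfree_car gfree_car)
qed

lemma gfree_zop_car: "F \<in> car (gfree p H X) \<Longrightarrow> zop (gfree p H X) F \<in> car (gfree p H X)"
proof -
  assume F: "F \<in> car (gfree p H X)"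
  have "{(v, j). zop (gfree p H X) F v j \<noteq> 0} \<subseteq> (\<lambda>(v, j). (v, Suc j)) ` {(v, j). F v j \<noteq> 0}"
  proof
    fix z assume "z \<in> {(v, j). zop (gfree p H X) F v j \<noteq> 0}"
    then obtain v j where "z = (v, j)" "j \<noteq> 0" "F v (j - 1) \<noteq> 0"
      by (auto simp: gfree_zop split: if_splits)
    then show "z \<in> (\<lambda>(v, j). (v, Suc j)) ` {(v, j). F v j \<noteq> 0}"
      by (intro image_eqI[where x="(v, j - 1)"]) auto
  qed
  moreover have "finite ((\<lambda>(v, j). (v, Suc j)) ` {(v, j). F v j \<noteq> 0})"
    using F by (simp add: gfree_car)
  ultimately have "finite {(v, j). zop (gfree p H X) F v j \<noteq> 0}" by (rule finite_subset)
  then show ?thesis using F by (auto simp: gfree_car gfree_zop)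
qed

lemma gfree_zpow:
  assumes F: "F \<in> car (gfree p H X)"
  shows "(zop (gfree p H X) ^^ n) F = (\<lambda>v j. if n \<le> j \<and> j < p then F v (j - n) else 0)"
proof (induction n)
  case 0
  then show ?case using F by (auto simp: gfree_car fun_eq_iff)
next
  case (Suc n)
  then show ?case by (auto simp: gfree_zop fun_eq_iff)
qed

lemma gfree_of_hfree_car:
  "0 < p \<Longrightarrow> G \<in> car (hfree H X) \<Longrightarrow> gfree_of_hfree G \<in> car (gfree p H X)"
proof -
  assume "0 < p" and G: "G \<in> car (hfree H X)"
  have "{(v, j). gfree_of_hfree G v j \<noteq> 0} = {v. G v \<noteq> 0} \<times> {0}"
    by (auto simp: gfree_of_hfree_def split: if_splits)
  then show ?thesis using \<open>0 < p\<close> G by (auto simp: gfree_car hfree_car gfree_of_hfree_def)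
qed

lemma gfree_basis_car: "0 < p \<Longrightarrow> x \<in> X \<Longrightarrow> gfree_basis H x \<in> car (gfree p H X)"
  unfolding gfree_basis_def by (intro gfree_of_hfree_car hfree_basis_car)

context
  fixes p :: nat and H :: "('b::finite, 'k::field) hopf"
  assumes H: "finite_group_scheme H" and p: "0 < p"
begin

lemma gfree_gmod: "is_gmod p H UNIV (gfree p H X)"
  unfolding is_gmod_def is_hmod_def
proof (intro conjI ballI)
  show "0 \<in> car (gfree p H X)" by (simp add: gfree_car)
next
  fix F G assume F: "F \<in> car (gfree p H X)" and G: "G \<in> car (gfree p H X)"
  show "F + G \<in> car (gfree p H X)"
    using F G
    by (auto simp: gfree_car intro: finite_subset[of _ "{(v, j). F v j \<noteq> 0} \<union> {(v, j). G v j \<noteq> 0}"])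
  fix a
  show "act (gfree p H X) a (F + G) = act (gfree p H X) a F + act (gfree p H X) a G"
    by (simp add: gfree_act hmult_add_right fun_eq_iff)
  show "zop (gfree p H X) (F + G) = zop (gfree p H X) F + zop (gfree p H X) G"
    by (simp add: gfree_zop fun_eq_iff)
next
  fix F assume F: "F \<in> car (gfree p H X)"
  show "- F \<in> car (gfree p H X)" using F by (auto simp: gfree_car)
  show "zop (gfree p H X) F \<in> car (gfree p H X)" using gfree_zop_car[OF F] .
  show "(zop (gfree p H X) ^^ p) F = 0" unfolding gfree_zpow[OF F] by (auto simp: fun_eq_iff)
  fix a
  show "act (gfree p H X) a F \<in> car (gfree p H X)"
    using F by (auto simp: gfree_car gfree_act intro: finite_subset[of _ "{(v, j). F v j \<noteq> 0}"])
  show "zop (gfree p H X) (act (gfree p H X) a F) = act (gfree p H X) a (zop (gfree p H X) F)"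
    by (simp add: gfree_zop gfree_act fun_eq_iff)
  fix b
  show "act (gfree p H X) (a + b) F = act (gfree p H X) a F + act (gfree p H X) b F"
    by (simp add: gfree_act hmult_add_left fun_eq_iff)
  show "act (gfree p H X) (hmult H a b) F = act (gfree p H X) a (act (gfree p H X) b F)"
    by (simp add: gfree_act hmult_assoc[OF H])
next
  fix F
  show "act (gfree p H X) (un H) F = F" by (simp add: gfree_act hmult_unit_left[OF H])
qed

lemma gfree_of_hfree_hhom: "is_hhom UNIV (hfree H X) (gfree p H X) gfree_of_hfree"
  unfolding is_hhom_def
  by (simp add: gfree_of_hfree_car[OF p])
    (simp add: gfree_of_hfree_def gfree_act hfree_act fun_eq_iff)

lemma gfree_sum_zpow_slices:
  assumes F: "F \<in> car (gfree p H X)"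
  shows "F = (\<Sum>l<p. (zop (gfree p H X) ^^ l) (gfree_of_hfree (\<lambda>x. F x l)))"
proof (rule ext, rule ext)
  fix v j
  have slice: "gfree_of_hfree (\<lambda>x. F x l) \<in> car (gfree p H X)" for l
    by (rule gfree_of_hfree_car[OF p gfree_slice_car[OF F]])
  have "(zop (gfree p H X) ^^ l) (gfree_of_hfree (\<lambda>x. F x l)) v j
      = (if l = j \<and> j < p then F v j else 0)"
    for l
    unfolding gfree_zpow[OF slice] by (simp add: gfree_of_hfree_def)
  then have "(\<Sum>l<p. (zop (gfree p H X) ^^ l) (gfree_of_hfree (\<lambda>x. F x l))) v j
      = (\<Sum>l<p. if l = j \<and> j < p then F v j else 0)"
    unfolding sum_fun_apply[of _ _ v] sum_fun_apply[of _ _ j] by simp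
  also have "\<dots> = F v j" using F by (cases "j < p") (auto simp: gfree_car)
  finally show "F v j = (\<Sum>l<p. (zop (gfree p H X) ^^ l) (gfree_of_hfree (\<lambda>x. F x l))) v j" by simp
qed

end

context
  fixes p :: nat and H :: "('b::finite, 'k::field) hopf" and N :: "('v::ab_group_add, 'b, 'k) gmod"
    and X :: "'x set" and \<chi>
  assumes H: "finite_group_scheme H" and p: "0 < p"
    and N: "is_gmod p H UNIV N" and \<chi>: "is_hhom UNIV (hfree H X) N \<chi>"
begin

lemma gfree_induce_slice_car: "F \<in> car (gfree p H X) \<Longrightarrow> \<chi> (\<lambda>x. F x l) \<in> car N"
  using hhom_car[OF \<chi> gfree_slice_car] .

lemma gfree_induce_zop:
  assumes F: "F \<in> car (gfree p H X)"
  shows "gfree_induce p N \<chi> (zop (gfree p H X) F) = zop N (gfree_induce p N \<chi> F)"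
proof -
  obtain q where q: "p = Suc q" using p by (cases p) auto
  have split: "(\<Sum>l<p. f l) = f 0 + (\<Sum>l<q. f (Suc l))" for f :: "nat \<Rightarrow> 'v"
    unfolding q by (rule sum.lessThan_Suc_shift)
  have z0: "(\<lambda>x. zop (gfree p H X) F x 0) = 0" by (simp add: gfree_zop fun_eq_iff)
  have zS: "(\<lambda>x. zop (gfree p H X) F x (Suc l)) = (\<lambda>x. F x l)" if "l < q" for l
    using that q by (simp add: gfree_zop fun_eq_iff)
  \<comment> \<open>Shifting the slices is undone by one more power of \<open>Z\<close>; the top term dies as \<open>Z\<^sup>p = 0\<close>.\<close>
  have "gfree_induce p N \<chi> (zop (gfree p H X) F)
      = (\<Sum>l<q. (zop N ^^ Suc l) (\<chi> (\<lambda>x. zop (gfree p H X) F x (Suc l))))"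
    unfolding gfree_induce_def split using z0 hhom_zero[OF hfree_hmod[OF H] \<chi>] by simp
  also have "\<dots> = (\<Sum>l<p. (zop N ^^ Suc l) (\<chi> (\<lambda>x. F x l)))"
    using zS gmod_zop_nilpotent[OF N gfree_induce_slice_car[OF F]] q by simp
  also have "\<dots> = zop N (gfree_induce p N \<chi> F)"
    unfolding gfree_induce_def
    by (simp add: hhom_sum[OF gmod_hmod[OF N] gmod_zop_hhom[OF N]] gmod_zpow[OF N]
        gfree_induce_slice_car[OF F])
  finally show ?thesis .
qed

lemma gfree_induce_ghom: "is_ghom UNIV (gfree p H X) N (gfree_induce p N \<chi>)"
  unfolding is_ghom_def is_hhom_def
proof (intro conjI ballI)
  fix F assume F: "F \<in> car (gfree p H X)"
  show "gfree_induce p N \<chi> F \<in> car N"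
    unfolding gfree_induce_def
    by (intro hmod_sum[OF gmod_hmod[OF N]] gmod_zpow[OF N] gfree_induce_slice_car[OF F])
  show "gfree_induce p N \<chi> (zop (gfree p H X) F) = zop N (gfree_induce p N \<chi> F)"
    by (rule gfree_induce_zop[OF F])
  fix a
  have "\<chi> (\<lambda>x. act (gfree p H X) a F x l) = act N a (\<chi> (\<lambda>x. F x l))" for l
    using hhom_act[OF \<chi> _ gfree_slice_car[OF F]] by (simp add: gfree_act hfree_act)
  then show "gfree_induce p N \<chi> (act (gfree p H X) a F) = act N a (gfree_induce p N \<chi> F)"
    unfolding gfree_induce_def
    by (simp add: hhom_act[OF gmod_zpow_hhom[OF N]] hmod_act_sum[OF gmod_hmod[OF N]]
        gmod_zpow[OF N] gfree_induce_slice_car[OF F])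
  fix G assume G: "G \<in> car (gfree p H X)"
  have "\<chi> (\<lambda>x. (F + G) x l) = \<chi> (\<lambda>x. F x l) + \<chi> (\<lambda>x. G x l)" for l
    using hhom_add[OF \<chi> gfree_slice_car[OF F] gfree_slice_car[OF G]] by (simp add: plus_fun_def)
  then show "gfree_induce p N \<chi> (F + G) = gfree_induce p N \<chi> F + gfree_induce p N \<chi> G"
    unfolding gfree_induce_def
    by (simp add: hhom_add[OF gmod_zpow_hhom[OF N]] gfree_induce_slice_car F G sum.distrib)
qed

lemma gfree_induce_of_hfree: "gfree_induce p N \<chi> (gfree_of_hfree G) = \<chi> G"
proof -
  have "(\<lambda>x. gfree_of_hfree G x l) = (if l = 0 then G else 0)" for l
    by (auto simp: gfree_of_hfree_def)
  then have "gfree_induce p N \<chi> (gfree_of_hfree G) = (\<Sum>l<p. if l = 0 then \<chi> G else 0)"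
    unfolding gfree_induce_def
    by (intro sum.cong) (simp_all add: hhom_zero[OF hfree_hmod[OF H] \<chi>]
        hhom_zero[OF gmod_hmod[OF N] gmod_zpow_hhom[OF N]])
  then show ?thesis using p by simp
qed

end

context
  fixes p :: nat and H :: "('b::finite, 'k::field) hopf"
  assumes H: "finite_group_scheme H" and p: "0 < p"
begin

lemma ghom_gfree_eqI:
  fixes N :: "('v::ab_group_add, 'b, 'k) gmod"
  assumes N: "is_gmod p H UNIV N"
    and h: "is_ghom UNIV (gfree p H X) N h" and h': "is_ghom UNIV (gfree p H X) N h'"
    and basis: "\<And>x. x \<in> X \<Longrightarrow> h (gfree_basis H x) = h' (gfree_basis H x)"
    and F: "F \<in> car (gfree p H X)"
  shows "h F = h' F"
proof -
  have G: "is_gmod p H UNIV (gfree p H X)" by (rule gfree_gmod[OF H p])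
  have slice: "gfree_of_hfree (\<lambda>x. F x l) \<in> car (gfree p H X)" for l
    by (rule gfree_of_hfree_car[OF p gfree_slice_car[OF F]])
  have expand: "g F = (\<Sum>l<p. (zop N ^^ l) (g (gfree_of_hfree (\<lambda>x. F x l))))"
    if g: "is_ghom UNIV (gfree p H X) N g" for g
    by (subst gfree_sum_zpow_slices[OF H p F])
      (simp add: hhom_sum[OF gmod_hmod[OF G] ghom_hhom[OF g]] gmod_zpow[OF G] slice
        ghom_zpow[OF g G])
  have "h (gfree_of_hfree G) = h' (gfree_of_hfree G)" if "G \<in> car (hfree H X)" for G
  proof -
    have hh: "is_hhom UNIV (hfree H X) N (\<lambda>G. g (gfree_of_hfree G))"
      if "is_ghom UNIV (gfree p H X) N g" for g
      using hhom_comp[OF gfree_of_hfree_hhom[OF H p] ghom_hhom[OF that]] .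
    show ?thesis
      using hhom_hfree_eq_ext[OF H gmod_hmod[OF N] hh[OF h] that]
        hhom_hfree_eq_ext[OF H gmod_hmod[OF N] hh[OF h'] that]
        hfree_ext_cong[OF gmod_hmod[OF N] that,
          of "\<lambda>x. h (gfree_basis H x)" "\<lambda>x. h' (gfree_basis H x)"]
        basis
      by (simp add: gfree_basis_def)
  qed
  then show ?thesis using expand[OF h] expand[OF h'] gfree_slice_car[OF F] by simp
qed

lemma gfree_ext_ghom:
  fixes N :: "('v::ab_group_add, 'b, 'k) gmod"
  assumes N: "is_gmod p H UNIV N" and phi: "\<And>x. x \<in> X \<Longrightarrow> \<phi> x \<in> car N"
  shows "is_ghom UNIV (gfree p H X) N (gfree_ext p N \<phi>)"
  unfolding gfree_ext_def
  by (rule gfree_induce_ghom[OF H p N hfree_ext_hhom[OF gmod_hmod[OF N] phi]])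

lemma gfree_ext_basis:
  fixes N :: "('v::ab_group_add, 'b, 'k) gmod"
  assumes N: "is_gmod p H UNIV N" and phi: "\<And>x. x \<in> X \<Longrightarrow> \<phi> x \<in> car N" and x: "x \<in> X"
  shows "gfree_ext p N \<phi> (gfree_basis H x) = \<phi> x"
proof -
  have "is_hhom UNIV (hfree H X) N (hfree_ext N \<phi>)" by (rule hfree_ext_hhom[OF gmod_hmod[OF N] phi])
  then show ?thesis
    unfolding gfree_ext_def gfree_basis_def
    by (simp add: gfree_induce_of_hfree[OF H p N] hfree_ext_basis[OF gmod_hmod[OF N]] phi x)
qed

text \<open>\<^const>\<open>stably_zero\<close> and \<^const>\<open>gproj\<close> require the free module on the carrier of
  the module itself; this lemma lets any free module take its place.\<close>

lemma gfree_factor_car: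
  fixes N :: "('v::ab_group_add, 'b, 'k) gmod"
  assumes N: "is_gmod p H UNIV N" and \<beta>: "is_ghom UNIV (gfree p H X) N \<beta>"
  shows "\<exists>\<Phi>. is_ghom UNIV (gfree p H X) (gfree p H (car N)) \<Phi> \<and>
            (\<forall>F\<in>car (gfree p H X). gfree_ext p N (\<lambda>v. v) (\<Phi> F) = \<beta> F)"
proof -
  have GN: "is_gmod p H UNIV (gfree p H (car N))" by (rule gfree_gmod[OF H p])
  have b: "\<beta> (gfree_basis H x) \<in> car N" if "x \<in> X" for x
    using ghom_hhom[OF \<beta>] gfree_basis_car[OF p that] by (rule hhom_car)
  define \<Phi> where "\<Phi> = gfree_ext p (gfree p H (car N)) (\<lambda>x. gfree_basis H (\<beta> (gfree_basis H x)))"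
  have \<Phi>: "is_ghom UNIV (gfree p H X) (gfree p H (car N)) \<Phi>"
    unfolding \<Phi>_def by (rule gfree_ext_ghom[OF GN]) (simp add: gfree_basis_car[OF p b])
  have \<rho>: "is_ghom UNIV (gfree p H (car N)) N (gfree_ext p N (\<lambda>v. v))"
    by (rule gfree_ext_ghom[OF N]) simp
  have "gfree_ext p N (\<lambda>v. v) (\<Phi> F) = \<beta> F" if "F \<in> car (gfree p H X)" for F
  proof (rule ghom_gfree_eqI[OF N ghom_comp[OF \<Phi> \<rho>] \<beta> _ that])
    fix x assume x: "x \<in> X"
    have "\<Phi> (gfree_basis H x) = gfree_basis H (\<beta> (gfree_basis H x))"
      unfolding \<Phi>_def by (rule gfree_ext_basis[OF GN _ x]) (simp add: gfree_basis_car[OF p b])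
    then show "gfree_ext p N (\<lambda>v. v) (\<Phi> (gfree_basis H x)) = \<beta> (gfree_basis H x)"
      using gfree_ext_basis[OF N, of "car N" "\<lambda>v. v"] b[OF x] by simp
  qed
  with \<Phi> show ?thesis by blast
qed

lemma gproj_gfree: "gproj p H (gfree p H X)"
proof -
  have G: "is_gmod p H UNIV (gfree p H X)" by (rule gfree_gmod[OF H p])
  have id: "is_ghom UNIV (gfree p H X) (gfree p H X) (\<lambda>F. F)" by (simp add: is_ghom_def is_hhom_def)
  have \<rho>: "is_ghom UNIV (gfree p H (car (gfree p H X))) (gfree p H X)
      (gfree_ext p (gfree p H X) (\<lambda>v. v))"
    by (rule gfree_ext_ghom[OF G]) simp
  show ?thesis
    unfolding gproj_def using G \<rho> gfree_factor_car[OF G id] by blast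
qed

lemma stably_zeroI:
  fixes M :: "('u::ab_group_add, 'b, 'k) gmod" and N :: "('v::ab_group_add, 'b, 'k) gmod"
  assumes N: "is_gmod p H UNIV N"
    and \<alpha>: "is_ghom UNIV M (gfree p H X) \<alpha>" and \<beta>: "is_ghom UNIV (gfree p H X) N \<beta>"
    and f: "\<And>v. v \<in> car M \<Longrightarrow> f v = \<beta> (\<alpha> v)"
  shows "stably_zero p H M N f"
proof -
  obtain \<Phi> where \<Phi>: "is_ghom UNIV (gfree p H X) (gfree p H (car N)) \<Phi>"
    and e: "\<forall>F\<in>car (gfree p H X). gfree_ext p N (\<lambda>v. v) (\<Phi> F) = \<beta> F"
    using gfree_factor_car[OF N \<beta>] by blast
  have \<rho>: "is_ghom UNIV (gfree p H (car N)) N (gfree_ext p N (\<lambda>v. v))"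
    by (rule gfree_ext_ghom[OF N]) simp
  have "\<forall>v\<in>car M. f v = gfree_ext p N (\<lambda>v. v) (\<Phi> (\<alpha> v))"
    using f e hhom_car[OF ghom_hhom[OF \<alpha>]] by simp
  then show ?thesis
    unfolding stably_zero_def using gproj_gfree ghom_comp[OF \<alpha> \<Phi>] \<rho> by blast
qed

lemma gprojI:
  fixes M :: "('u::ab_group_add, 'b, 'k) gmod"
  assumes M: "is_gmod p H UNIV M"
    and \<alpha>: "is_ghom UNIV M (gfree p H X) \<alpha>" and \<beta>: "is_ghom UNIV (gfree p H X) M \<beta>"
    and retract: "\<And>v. v \<in> car M \<Longrightarrow> \<beta> (\<alpha> v) = v"
  shows "gproj p H M"
proof -
  obtain \<Phi> where \<Phi>: "is_ghom UNIV (gfree p H X) (gfree p H (car M)) \<Phi>"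
    and e: "\<forall>F\<in>car (gfree p H X). gfree_ext p M (\<lambda>v. v) (\<Phi> F) = \<beta> F"
    using gfree_factor_car[OF M \<beta>] by blast
  have \<rho>: "is_ghom UNIV (gfree p H (car M)) M (gfree_ext p M (\<lambda>v. v))"
    by (rule gfree_ext_ghom[OF M]) simp
  have "\<forall>v\<in>car M. gfree_ext p M (\<lambda>v. v) (\<Phi> (\<alpha> v)) = v"
    using retract e hhom_car[OF ghom_hhom[OF \<alpha>]] by simp
  then show ?thesis
    unfolding gproj_def using M ghom_comp[OF \<alpha> \<Phi>] \<rho> by blast
qed

lemma gproj_if_stably_zero_id:
  fixes M :: "('u::ab_group_add, 'b, 'k) gmod"
  assumes M: "is_gmod p H UNIV M" and "stably_zero p H M M (\<lambda>v. v)"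
  shows "gproj p H M"
proof -
  obtain P :: "('u \<Rightarrow> nat \<Rightarrow> 'b \<Rightarrow> 'k, 'b, 'k) gmod" and \<alpha> \<beta> where P: "gproj p H P"
    and \<alpha>: "is_ghom UNIV M P \<alpha>" and \<beta>: "is_ghom UNIV P M \<beta>" and id: "\<forall>v\<in>car M. v = \<beta> (\<alpha> v)"
    using assms(2) unfolding stably_zero_def by blast
  obtain i r where i: "is_ghom UNIV P (gfree p H (car P)) i"
    and r: "is_ghom UNIV (gfree p H (car P)) P r"
    and ri: "\<forall>v\<in>car P. r (i v) = v"
    using P unfolding gproj_def by blast
  show ?thesis
    by (rule gprojI[OF M ghom_comp[OF \<alpha> i] ghom_comp[OF r \<beta>]])
      (use id ri hhom_car[OF ghom_hhom[OF \<alpha>]] in simp)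
qed

end

section \<open>The \<open>Z\<close>-trace\<close>

text \<open>\<open>gfree p H X\<close> is both induced and coinduced from \<open>hfree H X\<close>; this is why the
  \<open>Z\<close>-trace of a map passing through \<open>hfree H X\<close> factors through it.\<close>

definition ztrace :: "nat \<Rightarrow> ('u::ab_group_add, 'b, 'k) gmod \<Rightarrow> ('v::ab_group_add, 'b, 'k) gmod
    \<Rightarrow> ('u \<Rightarrow> 'v) \<Rightarrow> 'u \<Rightarrow> 'v" where
  "ztrace p M N f v = (\<Sum>l<p. (zop N ^^ l) (f ((zop M ^^ (p - 1 - l)) v)))"

definition gfree_coind :: "nat \<Rightarrow> ('u::ab_group_add, 'b, 'k) gmod \<Rightarrow> ('u \<Rightarrow> 'x \<Rightarrow> 'b \<Rightarrow> 'k::zero)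
    \<Rightarrow> 'u \<Rightarrow> 'x \<Rightarrow> nat \<Rightarrow> 'b \<Rightarrow> 'k" where
  "gfree_coind p M \<psi> v = (\<lambda>x l. if l < p then \<psi> ((zop M ^^ (p - 1 - l)) v) x else 0)"

context
  fixes p :: nat and H :: "('b::finite, 'k::field) hopf" and M :: "('u::ab_group_add, 'b, 'k) gmod"
    and X :: "'x set" and \<psi>
  assumes p: "0 < p" and M: "is_gmod p H UNIV M" and \<psi>: "is_hhom UNIV M (hfree H X) \<psi>"
begin

lemma gfree_coind_car:
  assumes v: "v \<in> car M"
  shows "gfree_coind p M \<psi> v \<in> car (gfree p H X)"
proof -
  have \<psi>Z: "\<psi> ((zop M ^^ n) v) \<in> car (hfree H X)" for n
    using hhom_car[OF \<psi> gmod_zpow[OF M v]] .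
  have "{(x, l). gfree_coind p M \<psi> v x l \<noteq> 0}
      \<subseteq> (\<Union>l<p. {x. \<psi> ((zop M ^^ (p - 1 - l)) v) x \<noteq> 0} \<times> {l})"
    by (auto simp: gfree_coind_def split: if_splits)
  moreover have "finite (\<Union>l<p. {x. \<psi> ((zop M ^^ (p - 1 - l)) v) x \<noteq> 0} \<times> {l})"
    using \<psi>Z by (auto simp: hfree_car)
  ultimately have "finite {(x, l). gfree_coind p M \<psi> v x l \<noteq> 0}" by (rule finite_subset)
  then show ?thesis using \<psi>Z by (auto simp: gfree_car hfree_car gfree_coind_def)
qed

lemma gfree_coind_zop:
  assumes v: "v \<in> car M"
  shows "gfree_coind p M \<psi> (zop M v) = zop (gfree p H X) (gfree_coind p M \<psi> v)"
proof -
  have "gfree_coind p M \<psi> (zop M v) x l = zop (gfree p H X) (gfree_coind p M \<psi> v) x l" for x l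
  proof (cases "l < p")
    case True
    then have "p - l = Suc (p - 1 - l)" by simp
    then have shift: "(zop M ^^ (p - 1 - l)) (zop M v) = (zop M ^^ (p - l)) v"
      by (simp only: funpow_Suc_right o_apply)
    show ?thesis
    proof (cases "l = 0")
      case True
      then show ?thesis
        using shift p gmod_zop_nilpotent[OF M v] hhom_zero[OF gmod_hmod[OF M] \<psi>]
        by (simp add: gfree_coind_def gfree_zop)
    next
      case False
      then have "p - 1 - (l - 1) = p - l" "l - 1 < p" using \<open>l < p\<close> by simp_all
      then show ?thesis using shift False \<open>l < p\<close> by (simp add: gfree_coind_def gfree_zop)
    qed
  qed (simp add: gfree_coind_def gfree_zop)
  then show ?thesis by (simp add: fun_eq_iff)
qed

lemma gfree_coind_ghom: "is_ghom UNIV M (gfree p H X) (gfree_coind p M \<psi>)"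
  unfolding is_ghom_def is_hhom_def
proof (intro conjI ballI)
  fix v assume v: "v \<in> car M"
  show "gfree_coind p M \<psi> v \<in> car (gfree p H X)" by (rule gfree_coind_car[OF v])
  show "gfree_coind p M \<psi> (zop M v) = zop (gfree p H X) (gfree_coind p M \<psi> v)"
    by (rule gfree_coind_zop[OF v])
  fix a
  have "\<psi> ((zop M ^^ n) (act M a v)) = act (hfree H X) a (\<psi> ((zop M ^^ n) v))" for n
    using hhom_act[OF gmod_zpow_hhom[OF M] _ v] hhom_act[OF \<psi> _ gmod_zpow[OF M v]] by simp
  then show "gfree_coind p M \<psi> (act M a v) = act (gfree p H X) a (gfree_coind p M \<psi> v)"
    by (simp add: gfree_coind_def gfree_act hfree_act fun_eq_iff)
  fix w assume w: "w \<in> car M"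
  have "\<psi> ((zop M ^^ n) (v + w)) = \<psi> ((zop M ^^ n) v) + \<psi> ((zop M ^^ n) w)" for n
    using hhom_add[OF gmod_zpow_hhom[OF M] v w] hhom_add[OF \<psi> gmod_zpow[OF M v] gmod_zpow[OF M w]]
    by simp
  then show "gfree_coind p M \<psi> (v + w) = gfree_coind p M \<psi> v + gfree_coind p M \<psi> w"
    by (simp add: gfree_coind_def fun_eq_iff)
qed

lemma gfree_induce_coind: "gfree_induce p N \<chi> (gfree_coind p M \<psi> v) = ztrace p M N (\<lambda>w. \<chi> (\<psi> w)) v"
  unfolding gfree_induce_def ztrace_def gfree_coind_def by (intro sum.cong) auto

end

lemma ztrace_stably_zero:
  fixes M :: "('u::ab_group_add, 'b::finite, 'k::field) gmod"
    and N :: "('v::ab_group_add, 'b, 'k) gmod"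
  assumes H: "finite_group_scheme H" and p: "0 < p"
    and M: "is_gmod p H UNIV M" and N: "is_gmod p H UNIV N"
    and \<psi>: "is_hhom UNIV M (hfree H X) \<psi>" and \<chi>: "is_hhom UNIV (hfree H X) M \<chi>"
    and retract: "\<And>v. v \<in> car M \<Longrightarrow> \<chi> (\<psi> v) = v"
    and f: "is_hhom UNIV M N f"
  shows "stably_zero p H M N (ztrace p M N f)"
proof (rule stably_zeroI[OF H p N gfree_coind_ghom[OF p M \<psi>]
      gfree_induce_ghom[OF H p N hhom_comp[OF \<chi> f]]])
  fix v assume "v \<in> car M"
  then show "ztrace p M N f v = gfree_induce p N (\<lambda>F. f (\<chi> F)) (gfree_coind p M \<psi> v)"
    unfolding gfree_induce_coind[OF p M \<psi>] ztrace_def by (simp add: retract gmod_zpow[OF M])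
qed

lemma cx_deg_car [simp]: "car (cx_deg C i) = cc C i"
  and cx_deg_act [simp]: "act (cx_deg C i) = cact C i"
  by (simp_all add: cx_deg_def)

context
  fixes H :: "('b::finite, 'k::field) hopf" and S and C :: "('c::ab_group_add, 'b, 'k) cx"
  assumes C: "is_cx H S C"
begin

lemma cx_hmod: "is_hmod H S (cx_deg C i)"
  and dd_hhom: "is_hhom S (cx_deg C (Suc i)) (cx_deg C i) (dd C (Suc i))"
  and dd_dd: "x \<in> cc C (Suc (Suc i)) \<Longrightarrow> dd C (Suc i) (dd C (Suc (Suc i)) x) = 0"
  using C by (simp_all add: is_cx_def)

lemma cc_zero: "0 \<in> cc C i"
  using hmod_zero[OF cx_hmod] by simp

lemma dd_car: "x \<in> cc C (Suc i) \<Longrightarrow> dd C (Suc i) x \<in> cc C i"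
  using hhom_car[OF dd_hhom] by simp

lemma dd_zero: "dd C (Suc i) 0 = 0"
  using hhom_zero[OF cx_hmod dd_hhom] .

end

lemma hproj_cx_split:
  assumes "\<forall>i. hproj H (cx_deg C i)"
  obtains \<iota> \<rho> where "\<And>i. is_hhom UNIV (cx_deg C i) (hfree H (cc C i)) (\<iota> i)"
    and "\<And>i. is_hhom UNIV (hfree H (cc C i)) (cx_deg C i) (\<rho> i)"
    and "\<And>i c. c \<in> cc C i \<Longrightarrow> \<rho> i (\<iota> i c) = c"
proof -
  let ?split = "\<lambda>i \<iota> \<rho>. is_hhom UNIV (cx_deg C i) (hfree H (cc C i)) \<iota> \<and>
    is_hhom UNIV (hfree H (cc C i)) (cx_deg C i) \<rho> \<and> (\<forall>c\<in>cc C i. \<rho> (\<iota> c) = c)"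
  have "\<forall>i. \<exists>\<iota> \<rho>. ?split i \<iota> \<rho>" using assms unfolding hproj_def cx_deg_car by blast
  from choice[OF this] obtain \<iota> where "\<forall>i. \<exists>\<rho>. ?split i (\<iota> i) \<rho>" ..
  from choice[OF this] obtain \<rho> where "\<forall>i. ?split i (\<iota> i) (\<rho> i)" ..
  then show ?thesis using that by blast
qed

lemma hhom_cc: "is_hhom S (cx_deg C i) N f \<Longrightarrow> c \<in> cc C i \<Longrightarrow> f c \<in> car N"
  using hhom_car[of S "cx_deg C i" N f c] by simp

lemma chain_map_hhom: "is_chain_map S C D \<sigma> \<Longrightarrow> is_hhom S (cx_deg C i) (cx_deg D i) (\<sigma> i)"
  and chain_map_dd:
    "is_chain_map S C D \<sigma> \<Longrightarrow> c \<in> cc C (Suc i) \<Longrightarrow> \<sigma> i (dd C (Suc i) c) = dd D (Suc i) (\<sigma> (Suc i) c)"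
  by (simp_all add: is_chain_map_def)

lemma chain_map_comp:
  assumes \<sigma>: "is_chain_map S C D \<sigma>" and \<tau>: "is_chain_map S D E \<tau>"
  shows "is_chain_map S C E (\<lambda>i c. \<tau> i (\<sigma> i c))"
  unfolding is_chain_map_def
proof (intro conjI allI ballI)
  fix i
  show "is_hhom S (cx_deg C i) (cx_deg E i) (\<lambda>c. \<tau> i (\<sigma> i c))"
    using hhom_comp[OF chain_map_hhom[OF \<sigma>] chain_map_hhom[OF \<tau>]] .
  fix c assume "c \<in> cc C (Suc i)"
  then show "\<tau> i (\<sigma> i (dd C (Suc i) c)) = dd E (Suc i) (\<tau> (Suc i) (\<sigma> (Suc i) c))"
    using hhom_car[OF chain_map_hhom[OF \<sigma>]] by (simp add: chain_map_dd[OF \<sigma>] chain_map_dd[OF \<tau>])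
qed

context
  fixes H :: "('b::finite, 'k::field) hopf"
  assumes H: "finite_group_scheme H"
begin

lemma hproj_lift_dd:
  fixes P :: "('p::ab_group_add, 'b, 'k, 'z) hmod_scheme" and D :: "('d::ab_group_add, 'b, 'k) cx"
  assumes P: "hproj H P" and D: "is_cx H UNIV D"
    and \<phi>: "is_hhom UNIV P (cx_deg D k) \<phi>" and im: "\<phi> ` car P \<subseteq> dd D (Suc k) ` cc D (Suc k)"
  shows "\<exists>\<psi>. is_hhom UNIV P (cx_deg D (Suc k)) \<psi> \<and> (\<forall>v\<in>car P. dd D (Suc k) (\<psi> v) = \<phi> v)"
  using hproj_lift[OF H P cx_hmod[OF D] cx_hmod[OF D] dd_hhom[OF D] \<phi>] im by simp

end

context
  fixes H :: "('b::finite, 'k::field) hopf"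
    and C :: "('c::ab_group_add, 'b, 'k) cx" and D :: "('d::ab_group_add, 'b, 'k) cx" and \<gamma>
  assumes H: "finite_group_scheme H" and C: "is_cx H UNIV C" and D: "is_cx H UNIV D"
    and proj: "\<forall>i. hproj H (cx_deg C i)"
    and exact: "\<forall>i. {x \<in> cc D (Suc i). dd D (Suc i) x = 0}
      \<subseteq> dd D (Suc (Suc i)) ` cc D (Suc (Suc i))"
    and \<gamma>: "is_chain_map UNIV C D \<gamma>"
begin

lemma dd_chain_map_minus:
  assumes f: "is_hhom UNIV (cx_deg C n) (cx_deg D (Suc n)) f" and c: "c \<in> cc C (Suc n)"
  shows "dd D (Suc n) (\<gamma> (Suc n) c - f (dd C (Suc n) c))
      = \<gamma> n (dd C (Suc n) c) - dd D (Suc n) (f (dd C (Suc n) c))"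
  using hhom_diff[OF cx_hmod[OF D] dd_hhom[OF D]] hhom_cc[OF chain_map_hhom[OF \<gamma>]]
    hhom_cc[OF f dd_car[OF C c]] c
  by (simp add: chain_map_dd[OF \<gamma>])

lemma chain_homotopy_base:
  assumes \<gamma>0: "\<gamma> 0 ` cc C 0 \<subseteq> dd D (Suc 0) ` cc D (Suc 0)"
  shows "\<exists>f. is_hhom UNIV (cx_deg C 0) (cx_deg D (Suc 0)) f \<and>
    (\<forall>c\<in>cc C (Suc 0). dd D (Suc 0) (\<gamma> (Suc 0) c - f (dd C (Suc 0) c)) = 0) \<and>
    (\<forall>c\<in>cc C 0. dd D (Suc 0) (f c) = \<gamma> 0 c)"
proof -
  obtain f where f: "is_hhom UNIV (cx_deg C 0) (cx_deg D (Suc 0)) f"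
    and df: "\<forall>c\<in>cc C 0. dd D (Suc 0) (f c) = \<gamma> 0 c"
    using hproj_lift_dd[OF H spec[OF proj] D chain_map_hhom[OF \<gamma>, of 0]] \<gamma>0 by auto
  then show ?thesis using dd_chain_map_minus[OF f] dd_car[OF C] by auto
qed

text \<open>Lifting \<open>\<gamma> - f d\<close> along \<open>d\<close> needs it to land in the boundaries; by exactness the
  invariant \<open>cycle\<close> suffices, and it is re-established one degree up.\<close>

lemma chain_homotopy_step:
  assumes f: "is_hhom UNIV (cx_deg C n) (cx_deg D (Suc n)) f"
    and cycle: "\<forall>c\<in>cc C (Suc n). dd D (Suc n) (\<gamma> (Suc n) c - f (dd C (Suc n) c)) = 0"
  shows "\<exists>f'. is_hhom UNIV (cx_deg C (Suc n)) (cx_deg D (Suc (Suc n))) f' \<and>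
    (\<forall>c\<in>cc C (Suc n). \<gamma> (Suc n) c = dd D (Suc (Suc n)) (f' c) + f (dd C (Suc n) c)) \<and>
    (\<forall>c\<in>cc C (Suc (Suc n)). dd D (Suc (Suc n)) (\<gamma> (Suc (Suc n)) c - f' (dd C (Suc (Suc n)) c)) = 0)"
proof -
  define \<phi> where "\<phi> c = \<gamma> (Suc n) c - f (dd C (Suc n) c)" for c
  have \<phi>: "is_hhom UNIV (cx_deg C (Suc n)) (cx_deg D (Suc n)) \<phi>"
    unfolding \<phi>_def
    by (rule hhom_minus[OF cx_hmod[OF D] chain_map_hhom[OF \<gamma>] hhom_comp[OF dd_hhom[OF C] f]])
  have "\<phi> ` car (cx_deg C (Suc n)) \<subseteq> dd D (Suc (Suc n)) ` cc D (Suc (Suc n))"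
    using exact hhom_car[OF \<phi>] cycle by (fastforce simp: \<phi>_def)
  then obtain f' where f': "is_hhom UNIV (cx_deg C (Suc n)) (cx_deg D (Suc (Suc n))) f'"
    and df': "\<forall>c\<in>cc C (Suc n). dd D (Suc (Suc n)) (f' c) = \<phi> c"
    using hproj_lift_dd[OF H spec[OF proj] D \<phi>] by auto
  have "dd D (Suc (Suc n)) (\<gamma> (Suc (Suc n)) c - f' (dd C (Suc (Suc n)) c)) = 0"
    if c: "c \<in> cc C (Suc (Suc n))" for c
  proof -
    have "dd D (Suc (Suc n)) (\<gamma> (Suc (Suc n)) c - f' (dd C (Suc (Suc n)) c))
        = \<gamma> (Suc n) (dd C (Suc (Suc n)) c) - \<phi> (dd C (Suc (Suc n)) c)"
      using dd_chain_map_minus[OF f' c] df' dd_car[OF C c] by simp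
    also have "\<dots> = f (dd C (Suc n) (dd C (Suc (Suc n)) c))" by (simp add: \<phi>_def)
    also have "\<dots> = 0" using dd_dd[OF C c] hhom_zero[OF cx_hmod[OF C] f] by simp
    finally show ?thesis .
  qed
  with f' df' show ?thesis by (auto simp: \<phi>_def)
qed

lemma chain_homotopy_exists:
  assumes \<gamma>0: "\<gamma> 0 ` cc C 0 \<subseteq> dd D 1 ` cc D 1"
  shows "\<exists>h. \<forall>i. is_hhom UNIV (cx_deg C i) (cx_deg D (Suc i)) (h i) \<and>
     (\<forall>c\<in>cc C i. \<gamma> i c = dd D (Suc i) (h i c) + (if i = 0 then 0 else h (i - 1) (dd C i c)))"
proof -
  define Inv where "Inv n f \<longleftrightarrow> is_hhom UNIV (cx_deg C n) (cx_deg D (Suc n)) f \<and>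
      (\<forall>c\<in>cc C (Suc n). dd D (Suc n) (\<gamma> (Suc n) c - f (dd C (Suc n) c)) = 0) \<and>
      (n = 0 \<longrightarrow> (\<forall>c\<in>cc C 0. dd D (Suc 0) (f c) = \<gamma> 0 c))" for n f
  define Step where "Step n f f' \<longleftrightarrow>
      (\<forall>c\<in>cc C (Suc n). \<gamma> (Suc n) c = dd D (Suc (Suc n)) (f' c) + f (dd C (Suc n) c))"
    for n and f f' :: "'c \<Rightarrow> 'd"
  have "\<exists>f. Inv 0 f" using chain_homotopy_base \<gamma>0 by (simp add: Inv_def)
  moreover have "\<exists>f'. Inv (Suc n) f' \<and> Step n f f'" if "Inv n f" for n f
    using chain_homotopy_step[of n f] that by (auto simp: Inv_def Step_def)
  ultimately obtain h where h: "\<And>n. Inv n (h n) \<and> Step n (h n) (h (Suc n))"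
    using dependent_nat_choice[of Inv Step] by blast
  show ?thesis
  proof (intro exI allI conjI ballI)
    fix i
    show "is_hhom UNIV (cx_deg C i) (cx_deg D (Suc i)) (h i)" using h by (simp add: Inv_def)
    fix c assume "c \<in> cc C i"
    then show "\<gamma> i c = dd D (Suc i) (h i c) + (if i = 0 then 0 else h (i - 1) (dd C i c))"
      using h[of 0] h[of "i - 1"] by (cases i) (simp_all add: Inv_def Step_def)
  qed
qed

end

context
  fixes H :: "('b::finite, 'k::field) hopf"
    and C :: "('c::ab_group_add, 'b, 'k) cx" and D :: "('d::ab_group_add, 'b, 'k) cx"
    and N :: "('n::ab_group_add, 'b, 'k) hmod" and \<epsilon>C \<epsilon>D
  assumes H: "finite_group_scheme H"
    and rC: "proj_resolution H C N \<epsilon>C" and rD: "proj_resolution H D N \<epsilon>D"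
begin

lemma comparison_base:
  "\<exists>f. is_hhom UNIV (cx_deg C 0) (cx_deg D 0) f \<and> (\<forall>c\<in>cc C 0. \<epsilon>D (f c) = \<epsilon>C c) \<and>
    (\<forall>c\<in>cc C (Suc 0). f (dd C (Suc 0) c) \<in> dd D (Suc 0) ` cc D (Suc 0))"
proof -
  have C: "is_cx H UNIV C" and D: "is_cx H UNIV D" and N: "is_hmod H UNIV N"
    and proj: "hproj H (cx_deg C 0)"
    and \<epsilon>C: "is_hhom UNIV (cx_deg C 0) N \<epsilon>C" and \<epsilon>D: "is_hhom UNIV (cx_deg D 0) N \<epsilon>D"
    and onto: "\<epsilon>D ` cc D 0 = car N"
    and kerC: "{x \<in> cc C 0. \<epsilon>C x = 0} = dd C (Suc 0) ` cc C (Suc 0)"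
    and kerD: "{x \<in> cc D 0. \<epsilon>D x = 0} = dd D (Suc 0) ` cc D (Suc 0)"
    using rC rD by (simp_all add: proj_resolution_def)
  obtain f where f: "is_hhom UNIV (cx_deg C 0) (cx_deg D 0) f"
    and \<epsilon>f: "\<forall>c\<in>cc C 0. \<epsilon>D (f c) = \<epsilon>C c"
    using hproj_lift[OF H proj cx_hmod[OF D] N \<epsilon>D \<epsilon>C] hhom_cc[OF \<epsilon>C]
    by (auto simp: onto image_subset_iff)
  have "f (dd C (Suc 0) c) \<in> dd D (Suc 0) ` cc D (Suc 0)" if c: "c \<in> cc C (Suc 0)" for c
  proof -
    have "dd C (Suc 0) c \<in> {x \<in> cc C 0. \<epsilon>C x = 0}" unfolding kerC using c by (rule imageI)
    then have "f (dd C (Suc 0) c) \<in> {x \<in> cc D 0. \<epsilon>D x = 0}" using \<epsilon>f hhom_cc[OF f] by simp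
    then show ?thesis unfolding kerD .
  qed
  with f \<epsilon>f show ?thesis by blast
qed

lemma comparison_step:
  assumes f: "is_hhom UNIV (cx_deg C n) (cx_deg D n) f"
    and im: "\<forall>c\<in>cc C (Suc n). f (dd C (Suc n) c) \<in> dd D (Suc n) ` cc D (Suc n)"
  shows "\<exists>f'. is_hhom UNIV (cx_deg C (Suc n)) (cx_deg D (Suc n)) f' \<and>
    (\<forall>c\<in>cc C (Suc n). dd D (Suc n) (f' c) = f (dd C (Suc n) c)) \<and>
    (\<forall>c\<in>cc C (Suc (Suc n)). f' (dd C (Suc (Suc n)) c) \<in> dd D (Suc (Suc n)) ` cc D (Suc (Suc n)))"
proof -
  have C: "is_cx H UNIV C" and D: "is_cx H UNIV D" and proj: "hproj H (cx_deg C (Suc n))"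
    and exact: "{x \<in> cc D (Suc n). dd D (Suc n) x = 0} = dd D (Suc (Suc n)) ` cc D (Suc (Suc n))"
    using rC rD by (simp_all add: proj_resolution_def)
  obtain f' where f': "is_hhom UNIV (cx_deg C (Suc n)) (cx_deg D (Suc n)) f'"
    and df': "\<forall>c\<in>cc C (Suc n). dd D (Suc n) (f' c) = f (dd C (Suc n) c)"
    using hproj_lift_dd[OF H proj D hhom_comp[OF dd_hhom[OF C] f]] im
    by (auto simp: image_subset_iff)
  have "f' (dd C (Suc (Suc n)) c) \<in> dd D (Suc (Suc n)) ` cc D (Suc (Suc n))"
    if c: "c \<in> cc C (Suc (Suc n))" for c
  proof -
    have "f' (dd C (Suc (Suc n)) c) \<in> {x \<in> cc D (Suc n). dd D (Suc n) x = 0}"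
      using df' dd_car[OF C c] dd_dd[OF C c] hhom_zero[OF cx_hmod[OF C] f]
        hhom_cc[OF f' dd_car[OF C c]]
      by simp
    then show ?thesis unfolding exact .
  qed
  with f' df' show ?thesis by blast
qed

lemma chain_map_exists: "\<exists>\<sigma>. is_chain_map UNIV C D \<sigma> \<and> (\<forall>c\<in>cc C 0. \<epsilon>D (\<sigma> 0 c) = \<epsilon>C c)"
proof -
  define Inv where "Inv n f \<longleftrightarrow> is_hhom UNIV (cx_deg C n) (cx_deg D n) f \<and>
      (\<forall>c\<in>cc C (Suc n). f (dd C (Suc n) c) \<in> dd D (Suc n) ` cc D (Suc n)) \<and>
      (n = 0 \<longrightarrow> (\<forall>c\<in>cc C 0. \<epsilon>D (f c) = \<epsilon>C c))" for n f
  define Step where "Step n f f' \<longleftrightarrow> (\<forall>c\<in>cc C (Suc n). dd D (Suc n) (f' c) = f (dd C (Suc n) c))"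
    for n and f f' :: "'c \<Rightarrow> 'd"
  have "\<exists>f. Inv 0 f" using comparison_base by (auto simp: Inv_def)
  moreover have "\<exists>f'. Inv (Suc n) f' \<and> Step n f f'" if "Inv n f" for n f
    using comparison_step[of n f] that by (auto simp: Inv_def Step_def)
  ultimately obtain \<sigma> where \<sigma>: "\<And>n. Inv n (\<sigma> n) \<and> Step n (\<sigma> n) (\<sigma> (Suc n))"
    using dependent_nat_choice[of Inv Step] by blast
  have "is_chain_map UNIV C D \<sigma>"
    unfolding is_chain_map_def using \<sigma> by (simp add: Inv_def Step_def)
  moreover have "\<forall>c\<in>cc C 0. \<epsilon>D (\<sigma> 0 c) = \<epsilon>C c" using \<sigma>[of 0] by (simp add: Inv_def)
  ultimately show ?thesis by blast
qed

end

section \<open>The resolution modules\<close>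

definition Mvalid :: "nat \<Rightarrow> nat \<Rightarrow> nat \<Rightarrow> bool" where
  "Mvalid p i j \<longleftrightarrow> (if odd i then j < p - 1 else j = 0)"

lemma Mcar_iff: "x \<in> Mcar p C n \<longleftrightarrow> finite {(i, j). x i j \<noteq> 0} \<and>
   (\<forall>i j. if enat i < 2 * n \<and> Mvalid p i j then x i j \<in> cc C i else x i j = 0)"
  by (simp add: Mcar_def Mvalid_def)

lemma Mcar_infI:
  assumes "finite {(i, j). x i j \<noteq> 0}" and "\<And>i j. Mvalid p i j \<Longrightarrow> x i j \<in> cc C i"
    and "\<And>i j. \<not> Mvalid p i j \<Longrightarrow> x i j = 0"
  shows "x \<in> Mcar p C \<infinity>"
proof -
  have "(2::enat) * \<infinity> = \<infinity>" by (simp add: imult_is_infinity)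
  then show ?thesis using assms by (simp add: Mcar_iff)
qed

lemma Mcar_finite: "x \<in> Mcar p C n \<Longrightarrow> finite {(i, j). x i j \<noteq> 0}"
  and Mcar_invalid: "x \<in> Mcar p C n \<Longrightarrow> \<not> Mvalid p i j \<Longrightarrow> x i j = 0"
  unfolding Mcar_iff by metis+

lemma Mcar_cc: "is_cx H S C \<Longrightarrow> x \<in> Mcar p C n \<Longrightarrow> x i j \<in> cc C i"
  using cc_zero unfolding Mcar_iff by metis

lemma Mmod_car [simp]: "car (Mmod p C n) = Mcar p C n"
  and Mmod_act [simp]: "act (Mmod p C n) = (\<lambda>a x i j. cact C i a (x i j))"
  and Mmod_zop [simp]: "zop (Mmod p C n) = MZ p C"
  by (simp_all add: Mmod_def)

lemma Mmap_ghom: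
  fixes C :: "('c::ab_group_add, 'b::finite, 'k::field) cx" and D :: "('d::ab_group_add, 'b, 'k) cx"
  assumes C: "is_cx H UNIV C" and \<sigma>: "is_chain_map UNIV C D \<sigma>"
  shows "is_ghom UNIV (Mmod p C n) (Mmod p D n) (Mmap \<sigma>)"
  unfolding is_ghom_def is_hhom_def
proof (intro conjI ballI)
  have \<sigma>0: "\<sigma> i 0 = 0" for i using hhom_zero[OF cx_hmod[OF C] chain_map_hhom[OF \<sigma>]] .
  fix x assume x: "x \<in> car (Mmod p C n)"
  then have xc: "x i j \<in> cc C i" for i j using Mcar_cc[OF C] by simp
  have "{(i, j). Mmap \<sigma> x i j \<noteq> 0} \<subseteq> {(i, j). x i j \<noteq> 0}" by (auto simp: Mmap_def \<sigma>0)
  moreover have "finite {(i, j). x i j \<noteq> 0}" using x Mcar_finite by simp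
  ultimately have "finite {(i, j). Mmap \<sigma> x i j \<noteq> 0}" by (rule finite_subset)
  then show "Mmap \<sigma> x \<in> car (Mmod p D n)"
    using x hhom_cc[OF chain_map_hhom[OF \<sigma>]] unfolding Mmod_car Mcar_iff by (auto simp: Mmap_def \<sigma>0)
  show "Mmap \<sigma> (zop (Mmod p C n) x) = zop (Mmod p D n) (Mmap \<sigma> x)"
    by (simp add: Mmap_def fun_eq_iff MZ_def chain_map_dd[OF \<sigma>] xc \<sigma>0)
  fix a
  have "\<sigma> i (cact C i a c) = cact D i a (\<sigma> i c)" if "c \<in> cc C i" for i c
    using hhom_act[OF chain_map_hhom[OF \<sigma>], of a c i] that by simp
  then show "Mmap \<sigma> (act (Mmod p C n) a x) = act (Mmod p D n) a (Mmap \<sigma> x)"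
    by (simp add: Mmap_def fun_eq_iff xc)
  fix y assume "y \<in> car (Mmod p C n)"
  then have yc: "y i j \<in> cc C i" for i j using Mcar_cc[OF C] by simp
  show "Mmap \<sigma> (x + y) = Mmap \<sigma> x + Mmap \<sigma> y"
    by (simp add: Mmap_def fun_eq_iff hhom_add[OF chain_map_hhom[OF \<sigma>]] xc yc)
qed

lemma cx_sum_cc: "cc (cx_sum C D) i = cc C i \<times> cc D i"
  and cx_sum_cact: "cact (cx_sum C D) i a = (\<lambda>(x, y). (cact C i a x, cact D i a y))"
  and cx_sum_dd: "dd (cx_sum C D) i = (\<lambda>(x, y). (dd C i x, dd D i y))"
  by (simp_all add: cx_sum_def)

lemma Mmod_cx_sum_giso:
  fixes C :: "('c::ab_group_add, 'b, 'k) cx" and D :: "('d::ab_group_add, 'b, 'k) cx"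
  shows "\<exists>f. is_giso UNIV (Mmod p (cx_sum C D) n) (gsum (Mmod p C n) (Mmod p D n)) f"
proof
  let ?f = "\<lambda>x :: nat \<Rightarrow> nat \<Rightarrow> 'c \<times> 'd. ((\<lambda>i j. fst (x i j)), (\<lambda>i j. snd (x i j)))"
  have car: "x \<in> Mcar p (cx_sum C D) n \<longleftrightarrow> ?f x \<in> Mcar p C n \<times> Mcar p D n" for x
  proof -
    have "{(i, j). x i j \<noteq> 0} = {(i, j). fst (x i j) \<noteq> 0} \<union> {(i, j). snd (x i j) \<noteq> 0}"
      by (auto simp: prod_eq_iff)
    then have "x \<in> Mcar p (cx_sum C D) n \<longleftrightarrow>
        (\<lambda>i j. fst (x i j)) \<in> Mcar p C n \<and> (\<lambda>i j. snd (x i j)) \<in> Mcar p D n"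
      unfolding Mcar_iff cx_sum_cc by (auto simp: prod_eq_iff mem_Times_iff split: if_splits)
    then show ?thesis by simp
  qed
  have "?f ` Mcar p (cx_sum C D) n = Mcar p C n \<times> Mcar p D n"
  proof
    show "Mcar p C n \<times> Mcar p D n \<subseteq> ?f ` Mcar p (cx_sum C D) n"
    proof
      fix z assume z: "z \<in> Mcar p C n \<times> Mcar p D n"
      have fz: "?f (\<lambda>i j. (fst z i j, snd z i j)) = z" by simp
      then have "(\<lambda>i j. (fst z i j, snd z i j)) \<in> Mcar p (cx_sum C D) n" using z car by presburger
      with fz show "z \<in> ?f ` Mcar p (cx_sum C D) n" by (rule image_eqI[OF sym])
    qed
  qed (use car in blast)
  moreover have "inj ?f" by (rule injI) (simp add: fun_eq_iff prod_eq_iff)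
  ultimately have "bij_betw ?f (Mcar p (cx_sum C D) n) (Mcar p C n \<times> Mcar p D n)"
    by (simp add: bij_betw_def inj_on_def inj_def)
  then show "is_giso UNIV (Mmod p (cx_sum C D) n) (gsum (Mmod p C n) (Mmod p D n)) ?f"
    unfolding is_giso_def is_ghom_def is_hhom_def
    by (simp add: car gsum_def cx_sum_cact cx_sum_dd MZ_def split_beta fun_eq_iff)
qed

text \<open>Both restrictions only change the action of elements outside \<open>J\<close>, which is zero on
  both sides.\<close>

lemma Mmod_cx_res_giso: "\<exists>f. is_giso J (gres J (Mmod p C n)) (Mmod p (cx_res J C) n) f"
proof
  have "car (gres J (Mmod p C n)) = car (Mmod p (cx_res J C) n)"
    by (simp add: gres_def Mmod_def Mcar_def cx_res_def)
  moreover have "MZ p (cx_res J C) = MZ p C" by (simp add: MZ_def cx_res_def fun_eq_iff)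
  ultimately show "is_giso J (gres J (Mmod p C n)) (Mmod p (cx_res J C) n) (\<lambda>x. x)"
    unfolding is_giso_def is_ghom_def is_hhom_def
    by (auto simp: gres_def cx_res_def fun_eq_iff bij_betw_def)
qed

text \<open>Closed form of \<open>Z\<^sup>l\<close> for \<open>l < p\<close>: on an odd summand the coordinates move up by \<open>l\<close>,
  and the differential of the summand above enters once, at \<open>l = j + 1\<close>; longer paths pass
  through two differentials and vanish.\<close>

definition MZ_power :: "nat \<Rightarrow> ('c::ab_group_add, 'b, 'k) cx \<Rightarrow> nat \<Rightarrow> (nat \<Rightarrow> nat \<Rightarrow> 'c)
    \<Rightarrow> nat \<Rightarrow> nat \<Rightarrow> 'c" where
  "MZ_power p C l x i j =
    (if odd i then
       (if j < p - 1 then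
          (if l \<le> j then x i (j - l) else if l = Suc j then dd C (Suc i) (x (Suc i) 0) else 0)
        else 0)
     else (if j = 0 then (if l = 0 then x i 0 else dd C (Suc i) (x (Suc i) (p - 1 - l))) else 0))"

context
  fixes H :: "('b::finite, 'k::field) hopf" and S
    and C :: "('c::ab_group_add, 'b, 'k) cx" and p :: nat
  assumes C: "is_cx H S C" and p2: "2 \<le> p"
begin

lemma funpow_MZ:
  assumes x: "x \<in> Mcar p C n"
  shows "l < p \<Longrightarrow> (MZ p C ^^ l) x = MZ_power p C l x"
proof (induction l)
  case 0
  show ?case
    using Mcar_invalid[OF x] by (auto simp: MZ_power_def Mvalid_def fun_eq_iff)
next
  case (Suc l)
  have xc: "x i j \<in> cc C i" for i j using Mcar_cc[OF C x] .
  have ddx: "dd C (Suc i) (dd C (Suc (Suc i)) (x (Suc (Suc i)) k)) = 0" for i k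
    using dd_dd[OF C xc] .
  have "MZ p C (MZ_power p C l x) i j = MZ_power p C (Suc l) x i j" for i j
    using Suc.prems p2 ddx
    by (cases "odd i"; cases "j = 0") (auto simp: MZ_def MZ_power_def dd_zero[OF C])
  then have "MZ p C (MZ_power p C l x) = MZ_power p C (Suc l) x" by (simp add: fun_eq_iff)
  with Suc show ?case by simp
qed

lemma funpow_MZ_nilpotent:
  assumes x: "x \<in> Mcar p C n"
  shows "(MZ p C ^^ p) x = 0"
proof -
  have ddx: "dd C (Suc i) (dd C (Suc (Suc i)) (x (Suc (Suc i)) k)) = 0" for i k
    using dd_dd[OF C Mcar_cc[OF C x]] .
  obtain q where q: "p = Suc q" using p2 by (cases p) auto
  have "(MZ p C ^^ p) x = MZ p C (MZ_power p C q x)" using funpow_MZ[OF x, of q] q by simp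
  also have "\<dots> = 0" using p2 q ddx by (auto simp: MZ_def MZ_power_def fun_eq_iff)
  finally show ?thesis .
qed

end

lemma MZ_car:
  assumes C: "is_cx H S C" and p2: "2 \<le> p" and x: "x \<in> Mcar p C \<infinity>"
  shows "MZ p C x \<in> Mcar p C \<infinity>"
proof (rule Mcar_infI)
  let ?supp = "{(i, j). x i j \<noteq> 0}"
  have "(i, j) \<in> (\<lambda>(i, j). (i - 1, 0)) ` ?supp \<union> (\<lambda>(i, j). (i, Suc j)) ` ?supp"
    if ne: "MZ p C x i j \<noteq> 0" for i j
  proof -
    consider "odd i" "j = 0" | "odd i" "j \<noteq> 0" | "even i" by blast
    then show "(i, j) \<in> (\<lambda>(i, j). (i - 1, 0)) ` ?supp \<union> (\<lambda>(i, j). (i, Suc j)) ` ?supp"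
    proof cases
      case 1
      then have "x (Suc i) 0 \<noteq> 0" using ne dd_zero[OF C] by (auto simp: MZ_def)
      then show ?thesis using 1 by (intro UnI1 image_eqI[where x="(Suc i, 0)"]) auto
    next
      case 2
      then have "x i (j - 1) \<noteq> 0" using ne by (auto simp: MZ_def split: if_splits)
      then show ?thesis using 2 by (intro UnI2 image_eqI[where x="(i, j - 1)"]) auto
    next
      case 3
      then have "j = 0" "x (Suc i) (p - 2) \<noteq> 0"
        using ne dd_zero[OF C] by (auto simp: MZ_def split: if_splits)
      then show ?thesis by (intro UnI1 image_eqI[where x="(Suc i, p - 2)"]) auto
    qed
  qed
  then have "{(i, j). MZ p C x i j \<noteq> 0}
      \<subseteq> (\<lambda>(i, j). (i - 1, 0)) ` ?supp \<union> (\<lambda>(i, j). (i, Suc j)) ` ?supp"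
    by blast
  then show "finite {(i, j). MZ p C x i j \<noteq> 0}"
    by (rule finite_subset) (simp add: Mcar_finite[OF x])
  show "MZ p C x i j \<in> cc C i" if "Mvalid p i j" for i j
    using that dd_car[OF C] Mcar_cc[OF C x] p2 by (auto simp: MZ_def Mvalid_def)
  show "MZ p C x i j = 0" if "\<not> Mvalid p i j" for i j
    using that p2 by (auto simp: MZ_def Mvalid_def)
qed

context
  fixes H :: "('b::finite, 'k::field) hopf" and C :: "('c::ab_group_add, 'b, 'k) cx"
  assumes C: "is_cx H UNIV C"
begin

lemma Mcar_add:
  assumes x: "x \<in> Mcar p C \<infinity>" and y: "y \<in> Mcar p C \<infinity>"
  shows "x + y \<in> Mcar p C \<infinity>"
proof (rule Mcar_infI)
  show "finite {(i, j). (x + y) i j \<noteq> 0}"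
    using Mcar_finite[OF x] Mcar_finite[OF y]
    by (auto intro: finite_subset[of _ "{(i, j). x i j \<noteq> 0} \<union> {(i, j). y i j \<noteq> 0}"])
qed (use hmod_add[OF cx_hmod[OF C]] Mcar_cc[OF C x] Mcar_cc[OF C y] Mcar_invalid[OF x]
    Mcar_invalid[OF y] in simp_all)

lemma Mcar_uminus:
  assumes x: "x \<in> Mcar p C \<infinity>"
  shows "- x \<in> Mcar p C \<infinity>"
  by (rule Mcar_infI)
    (use Mcar_finite[OF x] hmod_uminus[OF cx_hmod[OF C]] Mcar_cc[OF C x] Mcar_invalid[OF x]
      in simp_all)

lemma Mcar_act:
  assumes x: "x \<in> Mcar p C \<infinity>"
  shows "(\<lambda>i j. cact C i a (x i j)) \<in> Mcar p C \<infinity>"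
proof (rule Mcar_infI)
  show "finite {(i, j). cact C i a (x i j) \<noteq> 0}"
    using Mcar_finite[OF x] hmod_act_zero[OF cx_hmod[OF C]]
    by (auto intro: finite_subset[of _ "{(i, j). x i j \<noteq> 0}"])
qed (use hmod_act[OF cx_hmod[OF C]] Mcar_cc[OF C x] Mcar_invalid[OF x]
    hmod_act_zero[OF cx_hmod[OF C]] in simp_all)

lemma Mmod_gmod:
  assumes p2: "2 \<le> p"
  shows "is_gmod p H UNIV (Mmod p C \<infinity>)"
  unfolding is_gmod_def is_hmod_def Mmod_car Mmod_act Mmod_zop
proof (intro conjI ballI)
  have hm: "is_hmod H UNIV (cx_deg C i)" for i by (rule cx_hmod[OF C])
  show "0 \<in> Mcar p C \<infinity>" by (rule Mcar_infI) (auto simp: cc_zero[OF C])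
  fix x assume x: "x \<in> Mcar p C \<infinity>"
  have xc: "x i j \<in> cc C i" for i j by (rule Mcar_cc[OF C x])
  show "- x \<in> Mcar p C \<infinity>" by (rule Mcar_uminus[OF x])
  show "MZ p C x \<in> Mcar p C \<infinity>" by (rule MZ_car[OF C p2 x])
  show "(MZ p C ^^ p) x = 0" by (rule funpow_MZ_nilpotent[OF C p2 x])
  show "(\<lambda>i j. cact C i (un H) (x i j)) = x"
    using hmod_un_act[OF hm] xc by (simp add: fun_eq_iff)
  fix a
  show "(\<lambda>i j. cact C i a (x i j)) \<in> Mcar p C \<infinity>" by (rule Mcar_act[OF x])
  show "MZ p C (\<lambda>i j. cact C i a (x i j)) = (\<lambda>i j. cact C i a (MZ p C x i j))"
    using hhom_act[OF dd_hhom[OF C]] xc hmod_act_zero[OF hm] by (simp add: fun_eq_iff MZ_def)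
  fix b
  show "(\<lambda>i j. cact C i (a + b) (x i j)) = (\<lambda>i j. cact C i a (x i j)) + (\<lambda>i j. cact C i b (x i j))"
    using hmod_add_act[OF hm] xc by (simp add: fun_eq_iff)
  show "(\<lambda>i j. cact C i (hmult H a b) (x i j)) = (\<lambda>i j. cact C i a (cact C i b (x i j)))"
    using hmod_mult_act[OF hm] xc by (simp add: fun_eq_iff)
next
  fix x y assume x: "x \<in> Mcar p C \<infinity>" and y: "y \<in> Mcar p C \<infinity>"
  have xc: "x i j \<in> cc C i" "y i j \<in> cc C i" for i j using Mcar_cc[OF C x] Mcar_cc[OF C y] by auto
  show "x + y \<in> Mcar p C \<infinity>" by (rule Mcar_add[OF x y])
  fix a
  show "(\<lambda>i j. cact C i a ((x + y) i j)) = (\<lambda>i j. cact C i a (x i j)) + (\<lambda>i j. cact C i a (y i j))"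
    using hmod_act_add[OF cx_hmod[OF C]] xc by (simp add: fun_eq_iff)
  show "MZ p C (x + y) = MZ p C x + MZ p C y"
    using hhom_add[OF dd_hhom[OF C]] xc by (simp add: fun_eq_iff MZ_def)
qed

end

definition Mhomotopy :: "nat \<Rightarrow> (nat \<Rightarrow> 'c \<Rightarrow> 'd) \<Rightarrow> (nat \<Rightarrow> nat \<Rightarrow> 'c) \<Rightarrow> nat \<Rightarrow> nat \<Rightarrow> 'd::zero" where
  "Mhomotopy p h x = (\<lambda>i j.
     if odd i then (if j = 0 then h (i - 1) (x (i - 1) 0) else 0)
     else (if j = 0 \<and> i \<noteq> 0 then h (i - 1) (x (i - 1) (p - 2)) else 0))"

context
  fixes H :: "('b::finite, 'k::field) hopf" and p :: nat
    and C :: "('c::ab_group_add, 'b, 'k) cx" and D :: "('d::ab_group_add, 'b, 'k) cx" and h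
  assumes C: "is_cx H UNIV C" and D: "is_cx H UNIV D" and p2: "2 \<le> p"
    and h: "\<And>i. is_hhom UNIV (cx_deg C i) (cx_deg D (Suc i)) (h i)"
begin

lemma homotopy_zero: "h i 0 = 0"
  using hhom_zero[OF cx_hmod[OF C] h] .

lemma Mhomotopy_car:
  assumes x: "x \<in> Mcar p C n"
  shows "Mhomotopy p h x \<in> Mcar p D \<infinity>"
proof (rule Mcar_infI)
  let ?supp = "{(i, j). x i j \<noteq> 0}"
  have "{(i, j). Mhomotopy p h x i j \<noteq> 0} \<subseteq> (\<lambda>(i, j). (Suc i, 0)) ` ?supp"
  proof (clarify)
    fix i j assume ne: "Mhomotopy p h x i j \<noteq> 0"
    then have "i = Suc (i - 1)" "j = 0" by (auto simp: Mhomotopy_def split: if_splits)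
    moreover have "x (i - 1) (if odd i then 0 else p - 2) \<noteq> 0"
      using ne homotopy_zero by (auto simp: Mhomotopy_def split: if_splits)
    ultimately show "(i, j) \<in> (\<lambda>(i, j). (Suc i, 0)) ` ?supp"
      by (intro image_eqI[where x="(i - 1, if odd i then 0 else p - 2)"]) auto
  qed
  then show "finite {(i, j). Mhomotopy p h x i j \<noteq> 0}"
    by (rule finite_subset) (simp add: Mcar_finite[OF x])
  show "Mhomotopy p h x i j \<in> cc D i" if "Mvalid p i j" for i j
    using hhom_cc[OF h Mcar_cc[OF C x]] cc_zero[OF D]
    by (cases i) (auto simp: Mhomotopy_def)
  show "Mhomotopy p h x i j = 0" if "\<not> Mvalid p i j" for i j
    using that p2 by (auto simp: Mhomotopy_def Mvalid_def)
qed

lemma Mhomotopy_hhom: "is_hhom UNIV (Mmod p C \<infinity>) (Mmod p D \<infinity>) (Mhomotopy p h)"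
  unfolding is_hhom_def
proof (intro conjI ballI)
  fix x assume x: "x \<in> car (Mmod p C \<infinity>)"
  then show "Mhomotopy p h x \<in> car (Mmod p D \<infinity>)" using Mhomotopy_car by simp
  have xc: "x i j \<in> cc C i" for i j using Mcar_cc[OF C] x by simp
  fix a
  have "h i (cact C i a c) = cact D (Suc i) a (h i c)" if "c \<in> cc C i" for i c
    using hhom_act[OF h, of a c i] that by simp
  then show "Mhomotopy p h (act (Mmod p C \<infinity>) a x) = act (Mmod p D \<infinity>) a (Mhomotopy p h x)"
    using hmod_act_zero[OF cx_hmod[OF D]] xc
    by (auto simp: Mhomotopy_def fun_eq_iff Suc_pred')
next
  fix x y assume "x \<in> car (Mmod p C \<infinity>)" and "y \<in> car (Mmod p C \<infinity>)"
  then have "x i j \<in> cc C i" "y i j \<in> cc C i" for i j using Mcar_cc[OF C] by simp_all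
  then show "Mhomotopy p h (x + y) = Mhomotopy p h x + Mhomotopy p h y"
    by (simp add: Mhomotopy_def fun_eq_iff hhom_add[OF h])
qed

text \<open>Each of the \<open>p\<close> terms of the trace contributes to a coordinate \<open>(i, j)\<close> at most
  once through \<open>h d\<close> and once through \<open>d h\<close>, at different values of \<open>l\<close>.\<close>

lemma ztrace_Mhomotopy_term:
  assumes x: "x \<in> Mcar p C \<infinity>" and l: "l < p"
  shows "MZ_power p D l (Mhomotopy p h (MZ_power p C (p - 1 - l) x)) i j =
    (if Mvalid p i j then
       (if l = (if odd i then j else 0) then (if i = 0 then 0 else h (i - 1) (dd C i (x i j)))
        else 0) +
       (if l = (if odd i then Suc j else p - 1) then dd D (Suc i) (h i (x i j)) else 0)
     else 0)"
proof (cases "odd i")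
  case True
  then have i: "Suc (i - 1) = i" "i \<noteq> 0" by (cases i; simp)+
  consider "j < p - 1" "l = j" | "j < p - 1" "l = Suc j" | "j < p - 1" "l \<noteq> j" "l \<noteq> Suc j"
    | "\<not> j < p - 1" by blast
  then show ?thesis
  proof cases
    case 2
    then have "p - 1 - l = p - 2 - j" "p - 2 - (p - 2 - j) = j" "p - 2 < p - 1" by auto
    with 2 show ?thesis using True i p2 by (auto simp: MZ_power_def Mhomotopy_def Mvalid_def)
  qed (use True i p2 l homotopy_zero dd_zero[OF D]
      in \<open>auto simp: MZ_power_def Mhomotopy_def Mvalid_def\<close>)
next
  case False
  have "p - 1 = Suc (p - 2)" using p2 by simp
  then show ?thesis
    using False p2 l homotopy_zero dd_zero[OF D]
    by (cases i; cases "j = 0"; cases "l = 0") (auto simp: MZ_power_def Mhomotopy_def Mvalid_def)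
qed

lemma ztrace_Mhomotopy:
  assumes x: "x \<in> Mcar p C \<infinity>"
  shows "ztrace p (Mmod p C \<infinity>) (Mmod p D \<infinity>) (Mhomotopy p h) x
       = Mmap (\<lambda>i c. dd D (Suc i) (h i c) + (if i = 0 then 0 else h (i - 1) (dd C i c))) x"
proof (rule ext, rule ext)
  fix i j
  let ?A = "if i = 0 then 0 else h (i - 1) (dd C i (x i j))" and ?B = "dd D (Suc i) (h i (x i j))"
  have Zx: "(MZ p C ^^ k) x \<in> Mcar p C \<infinity>" for k
    using gmod_zpow[OF Mmod_gmod[OF C p2]] x by simp
  have "(MZ p D ^^ l) (Mhomotopy p h ((MZ p C ^^ (p - 1 - l)) x)) i j
      = (if Mvalid p i j then (if l = (if odd i then j else 0) then ?A else 0)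
           + (if l = (if odd i then Suc j else p - 1) then ?B else 0) else 0)" if "l < p" for l
  proof -
    have Z: "(MZ p C ^^ (p - 1 - l)) x = MZ_power p C (p - 1 - l) x"
      by (rule funpow_MZ[OF C p2 x]) (use p2 in simp)
    have "(MZ p D ^^ l) (Mhomotopy p h (MZ_power p C (p - 1 - l) x))
        = MZ_power p D l (Mhomotopy p h (MZ_power p C (p - 1 - l) x))"
      using funpow_MZ[OF D p2 Mhomotopy_car[OF Zx[of "p - 1 - l", unfolded Z]] that] .
    then show ?thesis unfolding Z using ztrace_Mhomotopy_term[OF x that] by simp
  qed
  then have "ztrace p (Mmod p C \<infinity>) (Mmod p D \<infinity>) (Mhomotopy p h) x i j
      = (if Mvalid p i j then ?A + ?B else 0)"
    using p2 unfolding ztrace_def sum_fun_apply[of _ _ i] sum_fun_apply[of _ _ j]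
    by (auto simp: sum.distrib Mvalid_def)
  also have "\<dots>
      = Mmap (\<lambda>i c. dd D (Suc i) (h i c) + (if i = 0 then 0 else h (i - 1) (dd C i c))) x i j"
    using Mcar_invalid[OF x, of i j] homotopy_zero dd_zero[OF D] dd_zero[OF C]
    by (cases i) (auto simp: Mmap_def)
  finally show "ztrace p (Mmod p C \<infinity>) (Mmod p D \<infinity>) (Mhomotopy p h) x i j
      = Mmap (\<lambda>i c. dd D (Suc i) (h i c) + (if i = 0 then 0 else h (i - 1) (dd C i c))) x i j" .
qed

end

definition Mto_hfree :: "nat \<Rightarrow> (nat \<Rightarrow> 'c \<Rightarrow> 'c \<Rightarrow> 'b \<Rightarrow> 'k) \<Rightarrow> (nat \<Rightarrow> nat \<Rightarrow> 'c)
    \<Rightarrow> nat \<times> nat \<times> 'c \<Rightarrow> 'b \<Rightarrow> 'k::zero" where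
  "Mto_hfree p \<iota> x = (\<lambda>(i, j, c). if Mvalid p i j then \<iota> i (x i j) c else 0)"

definition Mof_hfree :: "nat \<Rightarrow> (nat \<Rightarrow> ('c \<Rightarrow> 'b \<Rightarrow> 'k) \<Rightarrow> 'c) \<Rightarrow> (nat \<times> nat \<times> 'c \<Rightarrow> 'b \<Rightarrow> 'k)
    \<Rightarrow> nat \<Rightarrow> nat \<Rightarrow> 'c::zero" where
  "Mof_hfree p \<rho> F = (\<lambda>i j. if Mvalid p i j then \<rho> i (\<lambda>c. F (i, j, c)) else 0)"

context
  fixes H :: "('b::finite, 'k::field) hopf" and p :: nat and C :: "('c::ab_group_add, 'b, 'k) cx"
    and \<iota> \<rho>
  assumes H: "finite_group_scheme H" and C: "is_cx H UNIV C"
    and \<iota>: "\<And>i. is_hhom UNIV (cx_deg C i) (hfree H (cc C i)) (\<iota> i)"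
    and \<rho>: "\<And>i. is_hhom UNIV (hfree H (cc C i)) (cx_deg C i) (\<rho> i)"
    and \<rho>\<iota>: "\<And>i c. c \<in> cc C i \<Longrightarrow> \<rho> i (\<iota> i c) = c"
begin

abbreviation (input) "Mcoord_set \<equiv> {(i, j, c). Mvalid p i j \<and> c \<in> cc C i}"

lemma Mto_hfree_hhom: "is_hhom UNIV (Mmod p C \<infinity>) (hfree H Mcoord_set) (Mto_hfree p \<iota>)"
  unfolding is_hhom_def
proof (intro conjI ballI)
  have \<iota>0: "\<iota> i 0 = 0" for i using hhom_zero[OF cx_hmod[OF C] \<iota>] .
  fix x assume x: "x \<in> car (Mmod p C \<infinity>)"
  then have xc: "x i j \<in> cc C i" for i j using Mcar_cc[OF C] by simp
  let ?S = "SIGMA ij:{(i, j). x i j \<noteq> 0}. {c. \<iota> (fst ij) (x (fst ij) (snd ij)) c \<noteq> 0}"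
  have "{v. Mto_hfree p \<iota> x v \<noteq> 0} \<subseteq> (\<lambda>((i, j), c). (i, j, c)) ` ?S"
    by (force simp: Mto_hfree_def \<iota>0 split: if_splits)
  moreover have "finite ?S"
    using Mcar_finite[of x] x hhom_cc[OF \<iota> xc] by (intro finite_SigmaI) (auto simp: hfree_car)
  ultimately have "finite {v. Mto_hfree p \<iota> x v \<noteq> 0}" by (auto intro: finite_subset)
  then show "Mto_hfree p \<iota> x \<in> car (hfree H Mcoord_set)"
    using hhom_cc[OF \<iota> xc] by (auto simp: Mto_hfree_def hfree_car)
  fix a
  show "Mto_hfree p \<iota> (act (Mmod p C \<infinity>) a x) = act (hfree H Mcoord_set) a (Mto_hfree p \<iota> x)"
    using hhom_act[OF \<iota>] xc by (auto simp: Mto_hfree_def fun_eq_iff hfree_act)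
  fix y assume "y \<in> car (Mmod p C \<infinity>)"
  then have "y i j \<in> cc C i" for i j using Mcar_cc[OF C] by simp
  then show "Mto_hfree p \<iota> (x + y) = Mto_hfree p \<iota> x + Mto_hfree p \<iota> y"
    using hhom_add[OF \<iota>] xc by (auto simp: Mto_hfree_def fun_eq_iff)
qed

lemma Mof_hfree_hhom: "is_hhom UNIV (hfree H Mcoord_set) (Mmod p C \<infinity>) (Mof_hfree p \<rho>)"
  unfolding is_hhom_def
proof (intro conjI ballI)
  have slice: "(\<lambda>c. F (i, j, c)) \<in> car (hfree H (cc C i))"
    if F: "F \<in> car (hfree H Mcoord_set)" and "Mvalid p i j" for F i j
  proof -
    have "{c. F (i, j, c) \<noteq> 0} \<subseteq> (\<lambda>(i, j, c). c) ` {v. F v \<noteq> 0}" by force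
    then have "finite {c. F (i, j, c) \<noteq> 0}" using F by (auto simp: hfree_car intro: finite_subset)
    then show ?thesis using that by (auto simp: hfree_car)
  qed
  fix F assume F: "F \<in> car (hfree H Mcoord_set)"
  show "Mof_hfree p \<rho> F \<in> car (Mmod p C \<infinity>)"
    unfolding Mmod_car
  proof (rule Mcar_infI)
    have "{(i, j). Mof_hfree p \<rho> F i j \<noteq> 0} \<subseteq> (\<lambda>(i, j, c). (i, j)) ` {v. F v \<noteq> 0}"
    proof clarify
      fix i j assume "Mof_hfree p \<rho> F i j \<noteq> 0"
      then have "(\<lambda>c. F (i, j, c)) \<noteq> 0"
        using hhom_zero[OF hfree_hmod[OF H] \<rho>] by (auto simp: Mof_hfree_def split: if_splits)
      then obtain c where "F (i, j, c) \<noteq> 0" by (auto simp: fun_eq_iff)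
      then show "(i, j) \<in> (\<lambda>(i, j, c). (i, j)) ` {v. F v \<noteq> 0}" by force
    qed
    then show "finite {(i, j). Mof_hfree p \<rho> F i j \<noteq> 0}"
      using F by (auto simp: hfree_car intro: finite_subset)
  qed (use hhom_car[OF \<rho>] slice[OF F] in \<open>simp_all add: Mof_hfree_def\<close>)
  fix a
  have "\<rho> i (\<lambda>c. act (hfree H Mcoord_set) a F (i, j, c)) = cact C i a (\<rho> i (\<lambda>c. F (i, j, c)))"
    if "Mvalid p i j" for i j
    using hhom_act[OF \<rho> _ slice[OF F that], of a] by (simp add: hfree_act)
  then show "Mof_hfree p \<rho> (act (hfree H Mcoord_set) a F) = act (Mmod p C \<infinity>) a (Mof_hfree p \<rho> F)"
    using hmod_act_zero[OF cx_hmod[OF C]] by (auto simp: Mof_hfree_def fun_eq_iff)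
  fix G assume G: "G \<in> car (hfree H Mcoord_set)"
  have "\<rho> i (\<lambda>c. (F + G) (i, j, c)) = \<rho> i (\<lambda>c. F (i, j, c)) + \<rho> i (\<lambda>c. G (i, j, c))"
    if "Mvalid p i j" for i j
    using hhom_add[OF \<rho> slice[OF F that] slice[OF G that]] by (simp add: plus_fun_def)
  then show "Mof_hfree p \<rho> (F + G) = Mof_hfree p \<rho> F + Mof_hfree p \<rho> G"
    by (auto simp: Mof_hfree_def fun_eq_iff)
qed

lemma Mof_to_hfree: "x \<in> Mcar p C \<infinity> \<Longrightarrow> Mof_hfree p \<rho> (Mto_hfree p \<iota> x) = x"
  using \<rho>\<iota>[OF Mcar_cc[OF C]] Mcar_invalid
  by (auto simp: Mof_hfree_def Mto_hfree_def fun_eq_iff)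

end

section \<open>Null-homotopic maps are stably zero\<close>

lemma stably_zero_cong:
  "stably_zero p H M N f \<Longrightarrow> (\<And>v. v \<in> car M \<Longrightarrow> f v = g v) \<Longrightarrow> stably_zero p H M N g"
  unfolding stably_zero_def by metis

context
  fixes H :: "('b::finite, 'k::field) hopf" and p :: nat
  assumes H: "finite_group_scheme H" and p2: "2 \<le> p"
begin

lemma Mmap_null_homotopic_stably_zero:
  fixes C :: "('c::ab_group_add, 'b, 'k) cx" and D :: "('d::ab_group_add, 'b, 'k) cx"
  assumes C: "is_cx H UNIV C" and D: "is_cx H UNIV D" and proj: "\<forall>i. hproj H (cx_deg C i)"
    and h: "\<And>i. is_hhom UNIV (cx_deg C i) (cx_deg D (Suc i)) (h i)"
  shows "stably_zero p H (Mmod p C \<infinity>) (Mmod p D \<infinity>)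
      (Mmap (\<lambda>i c. dd D (Suc i) (h i c) + (if i = 0 then 0 else h (i - 1) (dd C i c))))"
proof -
  obtain \<iota> \<rho> where \<iota>: "\<And>i. is_hhom UNIV (cx_deg C i) (hfree H (cc C i)) (\<iota> i)"
    and \<rho>: "\<And>i. is_hhom UNIV (hfree H (cc C i)) (cx_deg C i) (\<rho> i)"
    and \<rho>\<iota>: "\<And>i c. c \<in> cc C i \<Longrightarrow> \<rho> i (\<iota> i c) = c"
    using hproj_cx_split[OF proj] by blast
  let ?M = "Mmod p C \<infinity>" and ?N = "Mmod p D \<infinity>"
  have "stably_zero p H ?M ?N (ztrace p ?M ?N (Mhomotopy p h))"
    using p2 Mof_to_hfree[OF H C \<iota> \<rho> \<rho>\<iota>]
    by (intro ztrace_stably_zero[OF H _ Mmod_gmod[OF C p2] Mmod_gmod[OF D p2]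
          Mto_hfree_hhom[OF H C \<iota> \<rho> \<rho>\<iota>] Mof_hfree_hhom[OF H C \<iota> \<rho> \<rho>\<iota>] _
          Mhomotopy_hhom[OF C D p2 h]])
      simp_all
  then show ?thesis
    by (rule stably_zero_cong) (simp add: ztrace_Mhomotopy[OF C D p2 h])
qed

lemma gproj_Mmod_exact:
  fixes C :: "('c::ab_group_add, 'b, 'k) cx"
  assumes C: "is_cx H UNIV C" and proj: "\<forall>i. hproj H (cx_deg C i)" and exact: "cx_exact C"
  shows "gproj p H (Mmod p C \<infinity>)"
proof -
  have id: "is_chain_map UNIV C C (\<lambda>i c. c)" by (simp add: is_chain_map_def is_hhom_def)
  \<comment> \<open>An exact complex of projectives is contractible: \<open>id = dh + hd\<close>.\<close>
  obtain h where h: "\<And>i. is_hhom UNIV (cx_deg C i) (cx_deg C (Suc i)) (h i)"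
    and dh: "\<And>i c. c \<in> cc C i \<Longrightarrow>
      c = dd C (Suc i) (h i c) + (if i = 0 then 0 else h (i - 1) (dd C i c))"
  proof -
    have "{x \<in> cc C (Suc i). dd C (Suc i) x = 0} \<subseteq> dd C (Suc (Suc i)) ` cc C (Suc (Suc i))" for i
      using exact[unfolded cx_exact_def, THEN spec, of "Suc i"] by simp
    moreover have "(\<lambda>c. c) ` cc C 0 \<subseteq> dd C 1 ` cc C 1"
      using exact[unfolded cx_exact_def, THEN spec, of 0] by simp
    ultimately show ?thesis using chain_homotopy_exists[OF H C C proj _ id] that by blast
  qed
  have "stably_zero p H (Mmod p C \<infinity>) (Mmod p C \<infinity>) (\<lambda>x. x)"
  proof (rule stably_zero_cong[OF Mmap_null_homotopic_stably_zero[OF C C proj h]])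
    fix x assume "x \<in> car (Mmod p C \<infinity>)"
    then show "Mmap (\<lambda>i c. dd C (Suc i) (h i c) + (if i = 0 then 0 else h (i - 1) (dd C i c))) x
        = x"
      using dh Mcar_cc[OF C] by (simp add: Mmap_def fun_eq_iff)
  qed
  then show ?thesis using gproj_if_stably_zero_id[OF H _ Mmod_gmod[OF C p2]] p2 by simp
qed

lemma Mmap_over_identity_stably_zero:
  fixes C :: "('c::ab_group_add, 'b, 'k) cx" and N :: "('n::ab_group_add, 'b, 'k) hmod"
  assumes res: "proj_resolution H C N \<epsilon>" and \<alpha>: "is_chain_map UNIV C C \<alpha>"
    and over_id: "\<forall>c\<in>cc C 0. \<epsilon> (\<alpha> 0 c) = \<epsilon> c"
  shows "stably_zero p H (Mmod p C \<infinity>) (Mmod p C \<infinity>) (\<lambda>x. Mmap \<alpha> x - x)"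
proof -
  have C: "is_cx H UNIV C" and proj: "\<forall>i. hproj H (cx_deg C i)"
    and \<epsilon>: "is_hhom UNIV (cx_deg C 0) N \<epsilon>" and N: "is_hmod H UNIV N"
    and ker: "{x \<in> cc C 0. \<epsilon> x = 0} = dd C 1 ` cc C 1"
    and exact: "\<forall>i. {x \<in> cc C (Suc i). dd C (Suc i) x = 0}
      = dd C (Suc (Suc i)) ` cc C (Suc (Suc i))"
    using res by (simp_all add: proj_resolution_def)
  have \<alpha>_car: "\<alpha> i c \<in> cc C i" if "c \<in> cc C i" for i c
    using hhom_cc[OF chain_map_hhom[OF \<alpha>] that] by simp
  have \<gamma>: "is_chain_map UNIV C C (\<lambda>i c. \<alpha> i c - c)"
    unfolding is_chain_map_def
  proof (intro conjI allI ballI)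
    fix i
    show "is_hhom UNIV (cx_deg C i) (cx_deg C i) (\<lambda>c. \<alpha> i c - c)"
      by (rule hhom_minus[OF cx_hmod[OF C] chain_map_hhom[OF \<alpha>]]) (simp add: is_hhom_def)
    fix c assume c: "c \<in> cc C (Suc i)"
    then show "\<alpha> i (dd C (Suc i) c) - dd C (Suc i) c = dd C (Suc i) (\<alpha> (Suc i) c - c)"
      using hhom_diff[OF cx_hmod[OF C] dd_hhom[OF C]] \<alpha>_car by (simp add: chain_map_dd[OF \<alpha>])
  qed
  have "(\<lambda>c. \<alpha> 0 c - c) ` cc C 0 \<subseteq> dd C 1 ` cc C 1"
    unfolding ker[symmetric]
    using over_id hhom_diff[OF cx_hmod[OF C] \<epsilon>] \<alpha>_car hmod_diff[OF cx_hmod[OF C]]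
    by auto
  then obtain h where h: "\<And>i. is_hhom UNIV (cx_deg C i) (cx_deg C (Suc i)) (h i)"
    and dh: "\<And>i c. c \<in> cc C i \<Longrightarrow>
      \<alpha> i c - c = dd C (Suc i) (h i c) + (if i = 0 then 0 else h (i - 1) (dd C i c))"
    using chain_homotopy_exists[OF H C C proj _ \<gamma>] exact by blast
  show ?thesis
  proof (rule stably_zero_cong[OF Mmap_null_homotopic_stably_zero[OF C C proj h]])
    fix x assume "x \<in> car (Mmod p C \<infinity>)"
    then show "Mmap (\<lambda>i c. dd C (Suc i) (h i c) + (if i = 0 then 0 else h (i - 1) (dd C i c))) x
        = Mmap \<alpha> x - x"
      using dh Mcar_cc[OF C] by (simp add: Mmap_def fun_eq_iff)
  qed
qed

lemma stable_iso_Mmod_resolutions: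
  fixes C :: "('c::ab_group_add, 'b, 'k) cx" and D :: "('d::ab_group_add, 'b, 'k) cx"
    and N :: "('n::ab_group_add, 'b, 'k) hmod"
  assumes rC: "proj_resolution H C N \<epsilon>C" and rD: "proj_resolution H D N \<epsilon>D"
  shows "stable_iso p H (Mmod p C \<infinity>) (Mmod p D \<infinity>)"
proof -
  have C: "is_cx H UNIV C" and D: "is_cx H UNIV D"
    using rC rD by (simp_all add: proj_resolution_def)
  obtain \<sigma> where \<sigma>: "is_chain_map UNIV C D \<sigma>" and \<sigma>0: "\<forall>c\<in>cc C 0. \<epsilon>D (\<sigma> 0 c) = \<epsilon>C c"
    using chain_map_exists[OF H rC rD] by blast
  obtain \<tau> where \<tau>: "is_chain_map UNIV D C \<tau>" and \<tau>0: "\<forall>c\<in>cc D 0. \<epsilon>C (\<tau> 0 c) = \<epsilon>D c"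
    using chain_map_exists[OF H rD rC] by blast
  have "stably_zero p H (Mmod p C \<infinity>) (Mmod p C \<infinity>) (\<lambda>x. Mmap \<tau> (Mmap \<sigma> x) - x)"
    using Mmap_over_identity_stably_zero[OF rC chain_map_comp[OF \<sigma> \<tau>]] \<sigma>0 \<tau>0
      hhom_cc[OF chain_map_hhom[OF \<sigma>]]
    by (simp add: Mmap_def)
  moreover have "stably_zero p H (Mmod p D \<infinity>) (Mmod p D \<infinity>) (\<lambda>x. Mmap \<sigma> (Mmap \<tau> x) - x)"
    using Mmap_over_identity_stably_zero[OF rD chain_map_comp[OF \<tau> \<sigma>]] \<sigma>0 \<tau>0
      hhom_cc[OF chain_map_hhom[OF \<tau>]]
    by (simp add: Mmap_def)
  ultimately show ?thesis
    unfolding stable_iso_def using Mmap_ghom[OF C \<sigma>] Mmap_ghom[OF D \<tau>] by blast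
qed

end

theorem lemma3p1:
  fixes H :: "('b::finite, 'k::field) hopf"
    and p :: nat
    and C :: "('c::ab_group_add, 'b, 'k) cx"
    and D :: "('d::ab_group_add, 'b, 'k) cx"
  assumes char: "CHAR('k) = p" and ppos: "p > 0"
    and H: "finite_group_scheme H"
    and C: "is_cx H UNIV C" and D: "is_cx H UNIV D"
  shows
   "(\<forall>\<sigma> n. is_chain_map UNIV C D \<sigma> \<and> n \<ge> 1 \<longrightarrow>
        is_ghom UNIV (Mmod p C n) (Mmod p D n) (Mmap \<sigma>)) \<and>
    (\<forall>n. n \<ge> 1 \<longrightarrow> (\<exists>f. is_giso UNIV (Mmod p (cx_sum C D) n) (gsum (Mmod p C n) (Mmod p D n)) f)) \<and>
    (\<forall>J n. subgroup_scheme H J \<and> n \<ge> 1 \<longrightarrow>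
        (\<exists>f. is_giso J (gres J (Mmod p C n)) (Mmod p (cx_res J C) n) f)) \<and>
    ((\<forall>i. hproj H (cx_deg C i)) \<and> cx_exact C \<longrightarrow> gproj p H (Mmod p C \<infinity>)) \<and>
    (\<forall>(N :: ('n::ab_group_add, 'b, 'k) hmod) epsC epsD.
        proj_resolution H C N epsC \<and> proj_resolution H D N epsD \<longrightarrow>
        stable_iso p H (Mmod p C \<infinity>) (Mmod p D \<infinity>))"
proof -
  have p2: "2 \<le> p" using char CHAR_not_1[where 'a='k] ppos by (cases "p = 1") auto
  show ?thesis
  proof (intro conjI allI impI)
    fix \<sigma> and n :: enat
    assume "is_chain_map UNIV C D \<sigma> \<and> 1 \<le> n"
    then show "is_ghom UNIV (Mmod p C n) (Mmod p D n) (Mmap \<sigma>)" using Mmap_ghom[OF C] by blast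
  next
    fix n :: enat
    show "\<exists>f. is_giso UNIV (Mmod p (cx_sum C D) n) (gsum (Mmod p C n) (Mmod p D n)) f"
      by (rule Mmod_cx_sum_giso)
  next
    fix J and n :: enat
    show "\<exists>f. is_giso J (gres J (Mmod p C n)) (Mmod p (cx_res J C) n) f"
      by (rule Mmod_cx_res_giso)
  next
    assume "(\<forall>i. hproj H (cx_deg C i)) \<and> cx_exact C"
    then show "gproj p H (Mmod p C \<infinity>)" using gproj_Mmod_exact[OF H p2 C] by blast
  next
    fix N :: "('n::ab_group_add, 'b, 'k) hmod" and \<epsilon>C \<epsilon>D
    assume "proj_resolution H C N \<epsilon>C \<and> proj_resolution H D N \<epsilon>D"
    then show "stable_iso p H (Mmod p C \<infinity>) (Mmod p D \<infinity>)"
      using stable_iso_Mmod_resolutions[OF H p2] by blast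
  qed
qed

end
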